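(* For all $p,q\ge0$ and $1\le a,b,c,d\le K$, the Poisson brackets on $\mathcal M(N,K)$ satisfy $$\{t^{(p)}_{ab},t^{(q)}_{cd}\}=\sum_{i=-1}^{\min(p,q)-1}\left(t^{(p+q-1-i)}_{ad}t^{(i)}_{cb}-t^{(i)}_{ad}t^{(p+q-1-i)}_{cb}\right),$$ with the convention $t^{(-1)}_{ab}=\delta_{ab}$. Moreover, for all $n\ge1$ the bracket of $\mathrm{Tr}(\widetilde B^n)$ with every element of $\mathbb C[\mathcal M(N,K)]$ is zero. In particular, the bracket satisfies the Jacobi identity on $\mathbb C[\mathcal M(N,K)]$ and so defines a Poisson structure on $\mathcal M(N,K)$.
   Context: $\mathrm{Rep}(N,K)$ is the space of triples $(B,\psi,\overline\psi)$, $B\in\mathrm{Mat}_{N\times N}(\mathbb C)$, $\psi\in\mathrm{Mat}_{N\times K}$ (columns $\psi_a$), $\overline\psi\in\mathrm{Mat}_{K\times N}$ (rows $\overline\psi_a$), with $\mathrm{GL}_N$-action $g\cdot(B,\psi,\overline\psi)=(gBg^{-1},g\psi,\overline\psi g^{-1})$, and $\mathcal M(N,K)=\mathrm{Spec}\,\mathbb C[\mathrm{Rep}(N,K)]^{\mathrm{GL}_N}$. A $\mathrm{GL}_N$-equivariant bivector is defined on $\mathrm{Rep}(N,K)$ by $\{\psi_{ia},\overline\psi_{bj}\}=\delta_{ab}\delta_{ij}$, $\{B_{mn},B_{pq}\}=\delta_{np}\sum_a\overline\psi_{aq}\psi_{ma}-\delta_{mq}\sum_a\overline\psi_{an}\psi_{pa}$,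 $\{B_{mn},\overline\psi_{bj}\}=\{B_{mn},\psi_{ia}\}=0$, extended as a biderivation (all variables treated as commuting), and it descends to invariant functions. $\widetilde B=B+\psi\overline\psi$, and $t^{(k)}_{ab}=2^{-k}\overline\psi_a\widetilde B^k\psi_b$ for $k\ge0$. *)

theory Defs
  imports "HOL-Analysis.Analysis"
begin

text \<open>A point of Rep(N,K): matrices B (N x N), psi (N x K), psibar (K x N),
  represented as functions on natural-number indices; only indices
  below N resp. K are relevant (indices start at 0).\<close>
record rep =
  Bm :: "nat \<Rightarrow> nat \<Rightarrow> complex"
  ps :: "nat \<Rightarrow> nat \<Rightarrow> complex"
  pb :: "nat \<Rightarrow> nat \<Rightarrow> complex"

inductive_set poly_fun :: "nat \<Rightarrow> nat \<Rightarrow> (rep \<Rightarrow> complex) set" for N K where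
  pf_const: "(\<lambda>x. c) \<in> poly_fun N K"
| pf_B: "i < N \<Longrightarrow> j < N \<Longrightarrow> (\<lambda>x. Bm x i j) \<in> poly_fun N K"
| pf_psi: "i < N \<Longrightarrow> a < K \<Longrightarrow> (\<lambda>x. ps x i a) \<in> poly_fun N K"
| pf_psib: "a < K \<Longrightarrow> i < N \<Longrightarrow> (\<lambda>x. pb x a i) \<in> poly_fun N K"
| pf_add: "f \<in> poly_fun N K \<Longrightarrow> g \<in> poly_fun N K \<Longrightarrow> (\<lambda>x. f x + g x) \<in> poly_fun N K"
| pf_mult: "f \<in> poly_fun N K \<Longrightarrow> g \<in> poly_fun N K \<Longrightarrow> (\<lambda>x. f x * g x) \<in> poly_fun N K"

definition mmul :: "nat \<Rightarrow> (nat \<Rightarrow> nat \<Rightarrow> complex) \<Rightarrow> (nat \<Rightarrow> nat \<Rightarrow> complex) \<Rightarrow> nat \<Rightarrow> nat \<Rightarrow> complex" where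
  "mmul n A C = (\<lambda>i j. \<Sum>k<n. A i k * C k j)"

fun mpow :: "nat \<Rightarrow> (nat \<Rightarrow> nat \<Rightarrow> complex) \<Rightarrow> nat \<Rightarrow> nat \<Rightarrow> nat \<Rightarrow> complex" where
  "mpow n A 0 = (\<lambda>i j. if i = j then 1 else 0)"
| "mpow n A (Suc k) = mmul n (mpow n A k) A"

text \<open>GL_N action: g with inverse h.\<close>
definition is_inv_pair :: "nat \<Rightarrow> (nat \<Rightarrow> nat \<Rightarrow> complex) \<Rightarrow> (nat \<Rightarrow> nat \<Rightarrow> complex) \<Rightarrow> bool" where
  "is_inv_pair N g h \<longleftrightarrow> (\<forall>i<N. \<forall>j<N. mmul N g h i j = (if i = j then 1 else 0)
                                         \<and> mmul N h g i j = (if i = j then 1 else 0))"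

definition gl_act :: "nat \<Rightarrow> (nat \<Rightarrow> nat \<Rightarrow> complex) \<Rightarrow> (nat \<Rightarrow> nat \<Rightarrow> complex) \<Rightarrow> rep \<Rightarrow> rep" where
  "gl_act N g h x = \<lparr> Bm = mmul N (mmul N g (Bm x)) h, ps = mmul N g (ps x), pb = mmul N (pb x) h \<rparr>"

text \<open>Coordinate ring of M(N,K) = GL_N-invariant polynomial functions on Rep(N,K).\<close>
definition inv_alg :: "nat \<Rightarrow> nat \<Rightarrow> (rep \<Rightarrow> complex) set" where
  "inv_alg N K = {f \<in> poly_fun N K. \<forall>g h x. is_inv_pair N g h \<longrightarrow> f (gl_act N g h x) = f x}"

definition dB :: "(rep \<Rightarrow> complex) \<Rightarrow> rep \<Rightarrow> nat \<Rightarrow> nat \<Rightarrow> complex" where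
  "dB f x m n = deriv (\<lambda>s. f (x\<lparr>Bm := (Bm x)(m := (Bm x m)(n := s))\<rparr>)) (Bm x m n)"

definition dps :: "(rep \<Rightarrow> complex) \<Rightarrow> rep \<Rightarrow> nat \<Rightarrow> nat \<Rightarrow> complex" where
  "dps f x i a = deriv (\<lambda>s. f (x\<lparr>ps := (ps x)(i := (ps x i)(a := s))\<rparr>)) (ps x i a)"

definition dpb :: "(rep \<Rightarrow> complex) \<Rightarrow> rep \<Rightarrow> nat \<Rightarrow> nat \<Rightarrow> complex" where
  "dpb f x a i = deriv (\<lambda>s. f (x\<lparr>pb := (pb x)(a := (pb x a)(i := s))\<rparr>)) (pb x a i)"

definition Bbr :: "nat \<Rightarrow> rep \<Rightarrow> nat \<Rightarrow> nat \<Rightarrow> nat \<Rightarrow> nat \<Rightarrow> complex" where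
  "Bbr K x m n p q =
     (if n = p then (\<Sum>a<K. pb x a q * ps x m a) else 0)
   - (if m = q then (\<Sum>a<K. pb x a n * ps x p a) else 0)"

text \<open>The bivector, extended as a biderivation:
  {f,g} = sum over coordinates u,v of df/du * dg/dv * {u,v}.\<close>
definition pbr :: "nat \<Rightarrow> nat \<Rightarrow> (rep \<Rightarrow> complex) \<Rightarrow> (rep \<Rightarrow> complex) \<Rightarrow> rep \<Rightarrow> complex" where
  "pbr N K f g = (\<lambda>x.
      (\<Sum>i<N. \<Sum>a<K. dps f x i a * dpb g x a i - dpb f x a i * dps g x i a)
    + (\<Sum>m<N. \<Sum>n<N. \<Sum>p<N. \<Sum>q<N. dB f x m n * dB g x p q * Bbr K x m n p q))"

definition Bt :: "nat \<Rightarrow> rep \<Rightarrow> nat \<Rightarrow> nat \<Rightarrow> complex" where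
  "Bt K x = (\<lambda>i j. Bm x i j + (\<Sum>a<K. ps x i a * pb x a j))"

definition tfun :: "nat \<Rightarrow> nat \<Rightarrow> nat \<Rightarrow> nat \<Rightarrow> nat \<Rightarrow> rep \<Rightarrow> complex" where
  "tfun N K k a b = (\<lambda>x. (1 / 2 ^ k) *
      (\<Sum>i<N. \<Sum>j<N. pb x a i * mpow N (Bt K x) k i j * ps x j b))"

definition tfun' :: "nat \<Rightarrow> nat \<Rightarrow> int \<Rightarrow> nat \<Rightarrow> nat \<Rightarrow> rep \<Rightarrow> complex" where
  "tfun' N K k a b = (if k = -1 then (\<lambda>x. if a = b then 1 else 0) else tfun N K (nat k) a b)"

definition trBt :: "nat \<Rightarrow> nat \<Rightarrow> nat \<Rightarrow> rep \<Rightarrow> complex" where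
  "trBt N K n = (\<lambda>x. \<Sum>i<N. mpow N (Bt K x) n i i)"

end

(*
  Write Bt = B + \<psi>\<psi>' (with \<psi>' for \<psi>-bar).  In the coordinates Bt, \<psi>, \<psi>' the bracket is
  simple: \<psi> and \<psi>' are canonically conjugate, the entries of Bt Poisson-commute,
  {\<psi>_ia, Bt_pq} = \<delta>_iq \<psi>_pa and {\<psi>'_ai, Bt_pq} = -\<delta>_ip \<psi>'_aq.  Since the bracket is a
  biderivation, induction on k gives the brackets of the entries of Bt^k with \<psi> and \<psi>', and
  contracting them gives {t(p)_ab, t(q)_cd} as a sum over k < p plus a sum over k < q.  The
  summand is antisymmetric under k \<mapsto> p + q - 1 - k, so together the two sums are twice the sum
  over k < min p q.

  Invariance of f under the curves t \<mapsto> 1 + t E_kl in GL_N differentiates to a linear relation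
  between the partial derivatives of f.  It says that f acts on Bt by the commutator with the
  matrix of its B-derivatives, so {f, Tr Bt^n} is the trace of a commutator.  The Jacobiator of a
  biderivation is the cyclic sum of the derivative of the bivector along the Hamiltonian field of
  f, evaluated on dg and dh.  Only the brackets {B, B} are not constant; invariance turns their
  derivatives into commutators with B, and the cyclic sum becomes a combination of traces of
  products of four matrices which cancels by cyclicity of the trace.
*)
theory Submission
  imports Defs
begin

section \<open>Finite sums and matrices\<close>

type_synonym cmat = "nat \<Rightarrow> nat \<Rightarrow> complex"

lemma sum_swap_pairs:
  "(\<Sum>m<N. \<Sum>n<N. \<Sum>p<N. \<Sum>q<N. H m n p q) = (\<Sum>p<N. \<Sum>q<N. \<Sum>m<N. \<Sum>n<N. H m n p q :: 'a::comm_monoid_add)"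
proof -
  have "(\<Sum>m<N. \<Sum>n<N. \<Sum>p<N. \<Sum>q<N. H m n p q) = (\<Sum>m<N. \<Sum>p<N. \<Sum>n<N. \<Sum>q<N. H m n p q)"
    by (intro sum.cong refl sum.swap)
  also have "\<dots> = (\<Sum>m<N. \<Sum>p<N. \<Sum>q<N. \<Sum>n<N. H m n p q)"
    by (intro sum.cong refl sum.swap)
  also have "\<dots> = (\<Sum>p<N. \<Sum>m<N. \<Sum>q<N. \<Sum>n<N. H m n p q)"
    by (rule sum.swap)
  also have "\<dots> = (\<Sum>p<N. \<Sum>q<N. \<Sum>m<N. \<Sum>n<N. H m n p q)"
    by (intro sum.cong refl sum.swap)
  finally show ?thesis .
qed

lemma sum_swap_outer3:
  "(\<Sum>l<(N::nat). \<Sum>m<N. \<Sum>s<(p::nat). F l m s) = (\<Sum>s<p. \<Sum>l<N. \<Sum>m<N. F l m s :: 'a::comm_monoid_add)"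
  by (simp add: sum.swap[of _ "{..<p}"])

lemma sum_rotate3: "(\<Sum>a\<in>A. \<Sum>b\<in>A. \<Sum>c\<in>A. F a b c) = (\<Sum>b\<in>A. \<Sum>c\<in>A. \<Sum>a\<in>A. F a b c :: 'a::comm_monoid_add)"
proof -
  have "(\<Sum>a\<in>A. \<Sum>b\<in>A. \<Sum>c\<in>A. F a b c) = (\<Sum>b\<in>A. \<Sum>a\<in>A. \<Sum>c\<in>A. F a b c)" by (rule sum.swap)
  also have "\<dots> = (\<Sum>b\<in>A. \<Sum>c\<in>A. \<Sum>a\<in>A. F a b c)" by (rule sum.cong[OF refl], rule sum.swap)
  finally show ?thesis .
qed

lemma sum_sum_mult_sum:
  "(\<Sum>l<(N::nat). \<Sum>m<N. X l m * (\<Sum>s<(p::nat). G s * Y s l m))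
    = (\<Sum>s<p. G s * (\<Sum>l<N. \<Sum>m<N. X l m * Y s l m :: 'a::comm_semiring_0))"
proof -
  have "(\<Sum>l<N. \<Sum>m<N. X l m * (\<Sum>s<p. G s * Y s l m)) = (\<Sum>l<N. \<Sum>m<N. \<Sum>s<p. G s * (X l m * Y s l m))"
    by (simp add: sum_distrib_left algebra_simps)
  also have "\<dots> = (\<Sum>s<p. \<Sum>l<N. \<Sum>m<N. G s * (X l m * Y s l m))" by (rule sum_swap_outer3)
  finally show ?thesis by (simp add: sum_distrib_left)
qed

lemma sum_sum_delta [simp]:
  "(\<Sum>i<(N::nat). \<Sum>a<(K::nat). if i = m \<and> a = d then X i a else 0) = (if m < N \<and> d < K then X m d else 0)"
proof -
  have "(\<Sum>i<N. \<Sum>a<K. if i = m \<and> a = d then X i a else 0) =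
      (\<Sum>i<N. if i = m then (\<Sum>a<K. if a = d then X i a else 0) else 0)"
    by (intro sum.cong refl) auto
  then show ?thesis by (simp add: sum.delta)
qed

lemma sum_sum_delta_outer [simp]:
  "(\<Sum>i<(N::nat). \<Sum>j<(M::nat). if i = m then X i j else 0) = (if m < N then (\<Sum>j<M. X m j) else 0)"
proof -
  have "(\<Sum>i<N. \<Sum>j<M. if i = m then X i j else 0) = (\<Sum>i<N. if i = m then (\<Sum>j<M. X i j) else 0)"
    by (intro sum.cong refl) auto
  then show ?thesis by (simp add: sum.delta)
qed

lemma mult_delta:
  "(A :: 'a :: semiring_1) * (if c then 1 else 0) * B = (if c then A * B else 0)"
  "A * (if c then 1 else 0) = (if c then A else 0)"
  "(if c then 1 else 0) * A = (if c then A else 0)"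
  by auto

lemma sum_reflect:
  "(\<Sum>s<p. F (s + q) (p - 1 - s)) = (\<Sum>k<p. F (p + q - 1 - k) (k :: nat))"
proof -
  have reflect: "p + q - 1 - (p - Suc s) = s + q" if "s < p" for s
    using that by arith
  have "(\<Sum>s<p. F (s + q) (p - 1 - s)) = (\<Sum>s<p. (\<lambda>k. F (p + q - 1 - k) k) (p - Suc s))"
    by (intro sum.cong refl) (simp add: reflect add.commute)
  also have "\<dots> = (\<Sum>k<p. F (p + q - 1 - k) k)"
    by (rule sum.nat_diff_reindex)
  finally show ?thesis .
qed

lemma sum_antisym_middle:
  fixes A :: "nat \<Rightarrow> 'a::field_char_0"
  assumes "p \<le> q" and antisym: "\<And>k. k < p + q \<Longrightarrow> A (p + q - 1 - k) = - A k"
  shows "(\<Sum>k\<in>{p..<q}. A k) = 0"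
proof -
  have "(\<Sum>k\<in>{p..<q}. A k) = (\<Sum>k\<in>{p..<q}. A (q + p - Suc k))"
    by (rule sum.atLeastLessThan_rev)
  also have "\<dots> = - (\<Sum>k\<in>{p..<q}. A k)"
  proof (simp only: sum_negf[symmetric], intro sum.cong refl)
    fix k assume "k \<in> {p..<q}"
    then have "k < p + q" "q + p - Suc k = p + q - 1 - k" by auto
    then show "A (q + p - Suc k) = - A k" using antisym by simp
  qed
  finally show ?thesis by simp
qed

lemma sum_lessThan_antisym:
  fixes A :: "nat \<Rightarrow> 'a::field_char_0"
  assumes "\<And>k. k < p + q \<Longrightarrow> A (p + q - 1 - k) = - A k"
  shows "(\<Sum>k<p. A k) + (\<Sum>k<q. A k) = 2 * (\<Sum>k<min p q. A k)"
proof -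
  have *: "(\<Sum>k<p. A k) + (\<Sum>k<q. A k) = 2 * (\<Sum>k<p. A k)"
    if "p \<le> q" "\<And>k. k < p + q \<Longrightarrow> A (p + q - 1 - k) = - A k" for p q
  proof -
    have "(\<Sum>k<q. A k) = (\<Sum>k<p. A k) + (\<Sum>k\<in>{p..<q}. A k)"
      using sum.atLeastLessThan_concat[of 0 p q A] that(1) by (simp add: atLeast0LessThan)
    with sum_antisym_middle[where A = A, OF that] show ?thesis by simp
  qed
  show ?thesis
  proof (cases "p \<le> q")
    case True then show ?thesis using *[of p q] assms by (simp add: min_def)
  next
    case False
    have "(\<Sum>k<q. A k) + (\<Sum>k<p. A k) = 2 * (\<Sum>k<q. A k)"
      by (rule *) (use False assms in \<open>auto simp: add.commute\<close>)
    then show ?thesis using False by (simp add: min_def add.commute)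
  qed
qed

lemma sum_from_minus_one: "(\<Sum>i\<in>{-1..int m - 1}. F i) = F (-1) + (\<Sum>k<m. F (int k))"
proof -
  have "{-1..int m - 1} = insert (-1) (int ` {..<m})"
  proof (rule set_eqI, rule iffI)
    fix i assume "i \<in> {-1..int m - 1}"
    then show "i \<in> insert (-1) (int ` {..<m})"
      by (cases "i = -1") (auto simp: image_iff intro!: bexI[of _ "nat i"])
  qed auto
  moreover have "(\<Sum>i\<in>insert (-1) (int ` {..<m}). F i) = F (-1) + (\<Sum>i\<in>int ` {..<m}. F i)"
    by (rule sum.insert) auto
  moreover have "(\<Sum>i\<in>int ` {..<m}. F i) = (\<Sum>k<m. F (int k))"
    by (rule sum.reindex_cong[of int]) auto
  ultimately show ?thesis by simp
qed

lemma mpow_Suc_apply: "mpow N A (Suc k) i j = (\<Sum>r<N. mpow N A k i r * A r j)"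
  by (simp add: mmul_def)

lemma sum_mpow_mpow: "m < N \<Longrightarrow> (\<Sum>j<N. mpow N A p i j * mpow N A r j m) = mpow N A (p + r) i m"
proof (induction r arbitrary: m)
  case 0 then show ?case by (simp add: mult_delta cong: if_cong)
next
  case (Suc r)
  have "(\<Sum>j<N. mpow N A p i j * mpow N A (Suc r) j m) =
      (\<Sum>j<N. \<Sum>t<N. mpow N A p i j * mpow N A r j t * A t m)"
    by (simp del: mpow.simps add: mpow_Suc_apply sum_distrib_left mult.assoc)
  also have "\<dots> = (\<Sum>t<N. \<Sum>j<N. mpow N A p i j * mpow N A r j t * A t m)"
    by (rule sum.swap)
  also have "\<dots> = (\<Sum>t<N. mpow N A (p + r) i t * A t m)"
    by (intro sum.cong refl) (simp add: Suc.IH[symmetric] sum_distrib_right)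
  finally show ?case by (simp del: mpow.simps add: mpow_Suc_apply)
qed

lemma mmul_assoc: "mmul N (mmul N A B) C = mmul N A (mmul N B C)"
proof (intro ext)
  fix i j
  have "(\<Sum>r<N. (\<Sum>s<N. A i s * B s r) * C r j) = (\<Sum>r<N. \<Sum>s<N. A i s * B s r * C r j)"
    by (simp add: sum_distrib_right)
  also have "\<dots> = (\<Sum>s<N. \<Sum>r<N. A i s * B s r * C r j)"
    by (rule sum.swap)
  finally show "mmul N (mmul N A B) C i j = mmul N A (mmul N B C) i j"
    by (simp add: mmul_def sum_distrib_left mult.assoc)
qed

lemma mmul_diff_left: "mmul N (\<lambda>i j. A i j - B i j) C i j = mmul N A C i j - mmul N B C i j"
  by (simp add: mmul_def left_diff_distrib sum_subtractf)

lemma mmul_diff_right: "mmul N A (\<lambda>i j. B i j - C i j) i j = mmul N A B i j - mmul N A C i j"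
  by (simp add: mmul_def right_diff_distrib sum_subtractf)

lemma mmul_one_left: "i < N \<Longrightarrow> mmul N (\<lambda>i j. if i = j then 1 else 0) B i j = B i j"
  by (simp add: mmul_def mult_delta cong: if_cong)

lemma mmul_one_right: "j < N \<Longrightarrow> mmul N B (\<lambda>i j. if i = j then 1 else 0) i j = B i j"
  by (simp add: mmul_def mult_delta cong: if_cong)

lemma trace_mmul_commute: "(\<Sum>i<N. mmul N A B i i) = (\<Sum>i<N. mmul N B A i i)"
  unfolding mmul_def by (subst sum.swap) (simp add: mult.commute)

definition trace4 :: "nat \<Rightarrow> cmat \<Rightarrow> cmat \<Rightarrow> cmat \<Rightarrow> cmat \<Rightarrow> complex" where
  "trace4 N X1 X2 X3 X4 = (\<Sum>a<N. \<Sum>b<N. \<Sum>c<N. \<Sum>d<N. X1 a b * X2 b c * X3 c d * X4 d a)"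

lemma trace4_rotate: "trace4 N X1 X2 X3 X4 = trace4 N X2 X3 X4 X1"
proof -
  have "trace4 N X1 X2 X3 X4 = (\<Sum>b<N. \<Sum>a<N. \<Sum>c<N. \<Sum>d<N. X1 a b * X2 b c * X3 c d * X4 d a)"
    unfolding trace4_def by (rule sum.swap)
  also have "\<dots> = (\<Sum>b<N. \<Sum>c<N. \<Sum>a<N. \<Sum>d<N. X1 a b * X2 b c * X3 c d * X4 d a)"
    by (rule sum.cong[OF refl], rule sum.swap)
  also have "\<dots> = (\<Sum>b<N. \<Sum>c<N. \<Sum>d<N. \<Sum>a<N. X1 a b * X2 b c * X3 c d * X4 d a)"
    by (rule sum.cong[OF refl], rule sum.cong[OF refl], rule sum.swap)
  also have "\<dots> = trace4 N X2 X3 X4 X1"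
    unfolding trace4_def by (simp add: algebra_simps)
  finally show ?thesis .
qed

definition elementary :: "nat \<Rightarrow> nat \<Rightarrow> complex \<Rightarrow> cmat" where
  "elementary k l t = (\<lambda>i j. (if i = j then 1 else 0) + (if i = k \<and> j = l then t else 0))"

lemma mmul_elementary_left:
  assumes "i < N" "l < N"
  shows "mmul N (elementary k l t) X i j = X i j + (if i = k then t * X l j else 0)"
proof -
  have "mmul N (elementary k l t) X i j = (\<Sum>r<N. (if i = r then X r j else 0)) +
      (\<Sum>r<N. if r = l then (if i = k then t else 0) * X r j else 0)"
    unfolding mmul_def elementary_def
    by (simp only: distrib_right sum.distrib) (intro arg_cong2[where f = "(+)"] sum.cong refl; auto)
  with assms show ?thesis by simp
qed

lemma mmul_elementary_right:
  assumes "j < N" "k < N"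
  shows "mmul N X (elementary k l t) i j = X i j + (if j = l then t * X i k else 0)"
proof -
  have "mmul N X (elementary k l t) i j = (\<Sum>r<N. (if r = j then X i r else 0)) +
      (\<Sum>r<N. if r = k then (if j = l then t else 0) * X i r else 0)"
    unfolding mmul_def elementary_def
    by (simp only: distrib_left sum.distrib) (intro arg_cong2[where f = "(+)"] sum.cong refl; auto)
  with assms show ?thesis by simp
qed

lemma is_inv_pair_elementary:
  assumes "k < N" "l < N" and "s + t + s * t * of_bool (k = l) = 0"
  shows "is_inv_pair N (elementary k l t) (elementary k l s)"
  unfolding is_inv_pair_def
proof (intro allI impI conjI)
  fix i j assume "i < N" "j < N"
  have "elementary k l s i j + (if i = k then t * elementary k l s l j else 0) = (if i = j then 1 else 0)"
    "elementary k l t i j + (if i = k then s * elementary k l t l j else 0) = (if i = j then 1 else 0)"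
    using assms(3) by (auto simp: elementary_def algebra_simps)
  with \<open>i < N\<close> assms(2) show "mmul N (elementary k l t) (elementary k l s) i j = (if i = j then 1 else 0)"
    "mmul N (elementary k l s) (elementary k l t) i j = (if i = j then 1 else 0)"
    by (simp_all add: mmul_elementary_left)
qed

section \<open>Coordinates and partial derivatives\<close>

datatype coord = CB nat nat | CPsi nat nat | CPsib nat nat

fun coord_val :: "rep \<Rightarrow> coord \<Rightarrow> complex" where
  "coord_val x (CB m n) = Bm x m n"
| "coord_val x (CPsi i a) = ps x i a"
| "coord_val x (CPsib a i) = pb x a i"

fun coord_upd :: "rep \<Rightarrow> coord \<Rightarrow> complex \<Rightarrow> rep" where
  "coord_upd x (CB m n) s = x\<lparr>Bm := (Bm x)(m := (Bm x m)(n := s))\<rparr>"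
| "coord_upd x (CPsi i a) s = x\<lparr>ps := (ps x)(i := (ps x i)(a := s))\<rparr>"
| "coord_upd x (CPsib a i) s = x\<lparr>pb := (pb x)(a := (pb x a)(i := s))\<rparr>"

definition coords :: "nat \<Rightarrow> nat \<Rightarrow> coord set" where
  "coords N K = (\<lambda>(m, n). CB m n) ` ({..<N} \<times> {..<N}) \<union> (\<lambda>(i, a). CPsi i a) ` ({..<N} \<times> {..<K})
     \<union> (\<lambda>(a, i). CPsib a i) ` ({..<K} \<times> {..<N})"

definition pdiff :: "(rep \<Rightarrow> complex) \<Rightarrow> rep \<Rightarrow> coord \<Rightarrow> complex" where
  "pdiff f x u = deriv (\<lambda>s. f (coord_upd x u s)) (coord_val x u)"

lemma coord_val_upd: "coord_val (coord_upd x u s) v = (if u = v then s else coord_val x v)"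
  by (cases u; cases v) auto

lemma coord_upd_val [simp]: "coord_upd x u (coord_val x u) = x"
  by (cases u) auto

lemma dB_eq_pdiff: "dB f x m n = pdiff f x (CB m n)"
  by (simp add: dB_def pdiff_def)

lemma dps_eq_pdiff: "dps f x i a = pdiff f x (CPsi i a)"
  by (simp add: dps_def pdiff_def)

lemma dpb_eq_pdiff: "dpb f x a i = pdiff f x (CPsib a i)"
  by (simp add: dpb_def pdiff_def)

lemma finite_coords [simp]: "finite (coords N K)"
  by (simp add: coords_def)

lemma mem_coords [simp]:
  "CB m n \<in> coords N K \<longleftrightarrow> m < N \<and> n < N"
  "CPsi i a \<in> coords N K \<longleftrightarrow> i < N \<and> a < K"
  "CPsib a i \<in> coords N K \<longleftrightarrow> a < K \<and> i < N"
  by (auto simp: coords_def)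

lemma sum_coords:
  "(\<Sum>u\<in>coords N K. F u) = (\<Sum>m<N. \<Sum>n<N. F (CB m n)) + (\<Sum>i<N. \<Sum>a<K. F (CPsi i a))
     + (\<Sum>a<K. \<Sum>i<N. F (CPsib a i))"
proof -
  let ?B = "(\<lambda>(m, n). CB m n) ` ({..<N} \<times> {..<N})"
  let ?S = "(\<lambda>(i, a). CPsi i a) ` ({..<N} \<times> {..<K})"
  let ?P = "(\<lambda>(a, i). CPsib a i) ` ({..<K} \<times> {..<N})"
  have "(\<Sum>u\<in>coords N K. F u) = sum F ?B + sum F ?S + sum F ?P"
    unfolding coords_def by (subst sum.union_disjoint, auto)+
  also have "sum F ?B = (\<Sum>m<N. \<Sum>n<N. F (CB m n))"
    by (subst sum.reindex) (auto simp: inj_on_def sum.cartesian_product prod.case_distrib)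
  also have "sum F ?S = (\<Sum>i<N. \<Sum>a<K. F (CPsi i a))"
    by (subst sum.reindex) (auto simp: inj_on_def sum.cartesian_product prod.case_distrib)
  also have "sum F ?P = (\<Sum>a<K. \<Sum>i<N. F (CPsib a i))"
    by (subst sum.reindex) (auto simp: inj_on_def sum.cartesian_product prod.case_distrib)
  finally show ?thesis .
qed

lemma sum_coords_delta: "v \<in> coords N K \<Longrightarrow> (\<Sum>u\<in>coords N K. (if u = v then 1 else 0) * F u) =
    (F v :: complex)"
  by (simp add: mult_if_delta sum.delta cong: if_cong)

lemma poly_fun_coord: "u \<in> coords N K \<Longrightarrow> (\<lambda>x. coord_val x u) \<in> poly_fun N K"
  by (cases u) (auto intro: poly_fun.intros)

lemma poly_fun_diff: "f \<in> poly_fun N K \<Longrightarrow> g \<in> poly_fun N K \<Longrightarrow> (\<lambda>x. f x - g x) \<in> poly_fun N K"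
  using poly_fun.pf_add[OF _ poly_fun.pf_mult[OF poly_fun.pf_const[of "-1"]]] by fastforce

lemma poly_fun_sum:
  "finite A \<Longrightarrow> (\<And>i. i \<in> A \<Longrightarrow> F i \<in> poly_fun N K) \<Longrightarrow> (\<lambda>x. \<Sum>i\<in>A. F i x) \<in> poly_fun N K"
  by (induction A rule: finite_induct) (auto intro: poly_fun.intros)

lemma poly_fun_eq_on_coords:
  "f \<in> poly_fun N K \<Longrightarrow> (\<And>u. u \<in> coords N K \<Longrightarrow> coord_val x u = coord_val y u) \<Longrightarrow> f x = f y"
proof (induction f rule: poly_fun.induct)
  case (pf_B i j) then show ?case using pf_B.prems[of "CB i j"] by simp
next
  case (pf_psi i a) then show ?case using pf_psi.prems[of "CPsi i a"] by simp
next
  case (pf_psib a i) then show ?case using pf_psib.prems[of "CPsib a i"] by simp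
qed simp_all

lemma poly_fun_field_differentiable:
  "f \<in> poly_fun N K \<Longrightarrow> (\<lambda>s. f (coord_upd x u s)) field_differentiable at s"
proof (induction f arbitrary: s rule: poly_fun.induct)
  case (pf_B i j) then show ?case
    using coord_val_upd[of x u _ "CB i j"] by (cases "u = CB i j") (auto intro: derivative_intros)
next
  case (pf_psi i a) then show ?case
    using coord_val_upd[of x u _ "CPsi i a"] by (cases "u = CPsi i a") (auto intro: derivative_intros)
next
  case (pf_psib a i) then show ?case
    using coord_val_upd[of x u _ "CPsib a i"] by (cases "u = CPsib a i") (auto intro: derivative_intros)
qed (auto intro!: derivative_intros)

lemma pdiff_const [simp]: "pdiff (\<lambda>x. c) x u = 0"
  by (simp add: pdiff_def)

lemma pdiff_coord: "pdiff (\<lambda>x. coord_val x v) x u = (if u = v then 1 else 0)"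
  unfolding pdiff_def coord_val_upd by (cases "u = v") simp_all

lemma pdiff_Bm: "pdiff (\<lambda>x. Bm x m n) x u = (if u = CB m n then 1 else 0)"
  using pdiff_coord[of "CB m n" x u] by simp

lemma pdiff_ps: "pdiff (\<lambda>x. ps x i a) x u = (if u = CPsi i a then 1 else 0)"
  using pdiff_coord[of "CPsi i a" x u] by simp

lemma pdiff_pb: "pdiff (\<lambda>x. pb x a i) x u = (if u = CPsib a i then 1 else 0)"
  using pdiff_coord[of "CPsib a i" x u] by simp

lemma pdiff_add:
  "f \<in> poly_fun N K \<Longrightarrow> g \<in> poly_fun N K \<Longrightarrow> pdiff (\<lambda>x. f x + g x) x u = pdiff f x u + pdiff g x u"
  unfolding pdiff_def by (rule deriv_add) (auto intro: poly_fun_field_differentiable)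

lemma pdiff_diff:
  "f \<in> poly_fun N K \<Longrightarrow> g \<in> poly_fun N K \<Longrightarrow> pdiff (\<lambda>x. f x - g x) x u = pdiff f x u - pdiff g x u"
  unfolding pdiff_def by (rule deriv_diff) (auto intro: poly_fun_field_differentiable)

lemma pdiff_mult:
  "f \<in> poly_fun N K \<Longrightarrow> g \<in> poly_fun N K \<Longrightarrow> pdiff (\<lambda>x. f x * g x) x u = f x * pdiff g x u + pdiff f x u * g x"
  unfolding pdiff_def by (subst deriv_mult) (auto intro: poly_fun_field_differentiable)

lemma pdiff_sum:
  assumes "finite A" and "\<And>i. i \<in> A \<Longrightarrow> F i \<in> poly_fun N K"
  shows "pdiff (\<lambda>x. \<Sum>i\<in>A. F i x) x u = (\<Sum>i\<in>A. pdiff (F i) x u)"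
  using assms
proof (induction A rule: finite_induct)
  case (insert a A)
  then have "pdiff (\<lambda>x. F a x + (\<Sum>i\<in>A. F i x)) x u = pdiff (F a) x u + pdiff (\<lambda>x. \<Sum>i\<in>A. F i x) x u"
    by (intro pdiff_add[where N = N and K = K] poly_fun_sum) auto
  with insert show ?case by simp
qed simp

lemma poly_fun_pdiff: "f \<in> poly_fun N K \<Longrightarrow> (\<lambda>x. pdiff f x u) \<in> poly_fun N K"
  by (induction f rule: poly_fun.induct)
     (simp_all add: pdiff_Bm pdiff_ps pdiff_pb pdiff_add pdiff_mult poly_fun.intros)

lemma pdiff_eq_on_coords:
  assumes "f \<in> poly_fun N K" and "\<And>u. u \<in> coords N K \<Longrightarrow> coord_val x u = coord_val y u"
    and "v \<in> coords N K"
  shows "pdiff f x v = pdiff f y v"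
proof -
  have "(\<lambda>s. f (coord_upd x v s)) = (\<lambda>s. f (coord_upd y v s))"
    by (rule ext, rule poly_fun_eq_on_coords[OF assms(1)]) (simp add: coord_val_upd assms(2))
  then show ?thesis by (simp add: pdiff_def assms(2,3))
qed

lemma poly_fun_chain_rule:
  assumes "f \<in> poly_fun N K"
    and "\<And>u. u \<in> coords N K \<Longrightarrow> ((\<lambda>t. coord_val (\<gamma> t) u) has_field_derivative \<gamma>' u) (at t0)"
  shows "((\<lambda>t. f (\<gamma> t)) has_field_derivative (\<Sum>u\<in>coords N K. pdiff f (\<gamma> t0) u * \<gamma>' u)) (at t0)"
  using assms(1)
proof (induction f rule: poly_fun.induct)
  case (pf_B i j) then show ?case using assms(2)[of "CB i j"] by (simp add: pdiff_Bm sum_coords_delta)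
next
  case (pf_psi i a) then show ?case using assms(2)[of "CPsi i a"] by (simp add: pdiff_ps sum_coords_delta)
next
  case (pf_psib a i) then show ?case using assms(2)[of "CPsib a i"] by (simp add: pdiff_pb sum_coords_delta)
next
  case (pf_add f g) then show ?case
    by (auto intro!: derivative_eq_intros simp: pdiff_add[where N = N and K = K] sum.distrib ring_distribs)
next
  case (pf_mult f g) then show ?case
    by (auto intro!: derivative_eq_intros
        simp: pdiff_mult[where N = N and K = K] sum.distrib sum_distrib_left sum_distrib_right
            algebra_simps)
qed simp

lemma derivation_expansion:
  assumes "\<And>c. D (\<lambda>x. c) x = 0"
    and "\<And>f g. f \<in> poly_fun N K \<Longrightarrow> g \<in> poly_fun N K \<Longrightarrow> D (\<lambda>x. f x + g x) x = D f x + D g x"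
    and "\<And>f g. f \<in> poly_fun N K \<Longrightarrow> g \<in> poly_fun N K \<Longrightarrow> D (\<lambda>x. f x * g x) x = f x * D g x + g x * D f x"
    and "f \<in> poly_fun N K"
  shows "D f x = (\<Sum>u\<in>coords N K. pdiff f x u * D (\<lambda>y. coord_val y u) x)"
  using assms(4)
proof (induction f rule: poly_fun.induct)
  case (pf_add f g) then show ?case
    by (simp add: assms(2) pdiff_add[where N = N and K = K] sum.distrib ring_distribs)
next
  case (pf_mult f g) then show ?case
    by (simp add: assms(3) pdiff_mult[where N = N and K = K] sum.distrib sum_distrib_left algebra_simps)
qed (simp_all add: assms(1) pdiff_Bm pdiff_ps pdiff_pb sum_coords_delta)

section \<open>The bracket\<close>

definition bivec :: "nat \<Rightarrow> nat \<Rightarrow> (coord \<Rightarrow> complex) \<Rightarrow> (coord \<Rightarrow> complex) \<Rightarrow> rep \<Rightarrow> complex" where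
  "bivec N K F G x =
      (\<Sum>i<N. \<Sum>a<K. F (CPsi i a) * G (CPsib a i) - F (CPsib a i) * G (CPsi i a))
    + (\<Sum>m<N. \<Sum>n<N. \<Sum>p<N. \<Sum>q<N. F (CB m n) * G (CB p q) * Bbr K x m n p q)"

lemma pbr_eq_bivec: "pbr N K f g x = bivec N K (pdiff f x) (pdiff g x) x"
  by (simp add: pbr_def bivec_def dB_eq_pdiff dps_eq_pdiff dpb_eq_pdiff)

lemma bivec_linear_left:
  "bivec N K (\<lambda>u. a * F1 u + b * F2 u) G x = a * bivec N K F1 G x + b * bivec N K F2 G x"
proof -
  have psi: "(a * F1 (CPsi i c) + b * F2 (CPsi i c)) * G (CPsib c i) -
      (a * F1 (CPsib c i) + b * F2 (CPsib c i)) * G (CPsi i c)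
     = a * (F1 (CPsi i c) * G (CPsib c i) - F1 (CPsib c i) * G (CPsi i c))
     + b * (F2 (CPsi i c) * G (CPsib c i) - F2 (CPsib c i) * G (CPsi i c))" for i c
    by algebra
  have B: "(a * F1 (CB m n) + b * F2 (CB m n)) * G (CB p q) * Bbr K x m n p q
     = a * (F1 (CB m n) * G (CB p q) * Bbr K x m n p q) + b * (F2 (CB m n) * G (CB p q) * Bbr K x m n p q)"
    for m n p q
    by algebra
  show ?thesis unfolding bivec_def psi B sum.distrib sum_distrib_left[symmetric] by algebra
qed

lemma Bbr_swap: "Bbr K x p q m n = - Bbr K x m n p q"
  by (simp add: Bbr_def)

lemma bivec_skew: "bivec N K F G x = - bivec N K G F x"
proof -
  have psi: "(\<Sum>i<N. \<Sum>a<K. F (CPsi i a) * G (CPsib a i) - F (CPsib a i) * G (CPsi i a))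
     = - (\<Sum>i<N. \<Sum>a<K. G (CPsi i a) * F (CPsib a i) - G (CPsib a i) * F (CPsi i a))"
    by (simp add: sum_negf[symmetric] algebra_simps)
  have "(\<Sum>m<N. \<Sum>n<N. \<Sum>p<N. \<Sum>q<N. G (CB m n) * F (CB p q) * Bbr K x m n p q)
      = (\<Sum>p<N. \<Sum>q<N. \<Sum>m<N. \<Sum>n<N. G (CB m n) * F (CB p q) * Bbr K x m n p q)"
    by (rule sum_swap_pairs)
  also have "\<dots> = - (\<Sum>p<N. \<Sum>q<N. \<Sum>m<N. \<Sum>n<N. F (CB p q) * G (CB m n) * Bbr K x p q m n)"
    by (simp only: sum_negf[symmetric], intro sum.cong refl, simp add: Bbr_def algebra_simps)
  finally have B: "(\<Sum>m<N. \<Sum>n<N. \<Sum>p<N. \<Sum>q<N. F (CB m n) * G (CB p q) * Bbr K x m n p q)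
     = - (\<Sum>m<N. \<Sum>n<N. \<Sum>p<N. \<Sum>q<N. G (CB m n) * F (CB p q) * Bbr K x m n p q)"
    by simp
  show ?thesis unfolding bivec_def psi B by simp
qed

lemma pbr_skew: "pbr N K f g x = - pbr N K g f x"
  by (simp add: pbr_eq_bivec bivec_skew[of N K "pdiff f x"])

lemma poly_fun_Bbr:
  assumes "m < N" "n < N" "p < N" "q < N"
  shows "(\<lambda>x. Bbr K x m n p q) \<in> poly_fun N K"
proof -
  have pairing: "(\<lambda>x. \<Sum>a<K. pb x a j * ps x i a) \<in> poly_fun N K" if "i < N" "j < N" for i j
    using that by (auto intro!: poly_fun_sum poly_fun.intros)
  show ?thesis
    unfolding Bbr_def
    by (rule poly_fun_diff; cases "n = p"; cases "m = q")
        (use assms pairing in \<open>auto intro: poly_fun.pf_const\<close>)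
qed

lemma poly_fun_pbr: "f \<in> poly_fun N K \<Longrightarrow> g \<in> poly_fun N K \<Longrightarrow> pbr N K f g \<in> poly_fun N K"
  unfolding pbr_def dB_eq_pdiff dps_eq_pdiff dpb_eq_pdiff
  by (intro poly_fun.pf_add poly_fun_sum poly_fun_diff poly_fun.pf_mult poly_fun_pdiff poly_fun_Bbr) auto

lemma pbr_const_left [simp]: "pbr N K (\<lambda>x. c) h x = 0"
  by (simp add: pbr_eq_bivec bivec_def)

lemma pbr_const_right [simp]: "pbr N K h (\<lambda>x. c) x = 0"
  by (subst pbr_skew) simp

lemma pbr_mult_left:
  assumes "f \<in> poly_fun N K" "g \<in> poly_fun N K"
  shows "pbr N K (\<lambda>x. f x * g x) h x = f x * pbr N K g h x + g x * pbr N K f h x"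
proof -
  from assms have "pdiff (\<lambda>x. f x * g x) x = (\<lambda>u. f x * pdiff g x u + g x * pdiff f x u)"
    by (auto simp: pdiff_mult[where N = N and K = K])
  then show ?thesis by (simp add: pbr_eq_bivec bivec_linear_left)
qed

lemma pbr_add_left:
  assumes "f \<in> poly_fun N K" "g \<in> poly_fun N K"
  shows "pbr N K (\<lambda>x. f x + g x) h x = pbr N K f h x + pbr N K g h x"
proof -
  from assms have "pdiff (\<lambda>x. f x + g x) x = (\<lambda>u. 1 * pdiff f x u + 1 * pdiff g x u)"
    by (auto simp: pdiff_add[where N = N and K = K])
  then show ?thesis by (simp only: pbr_eq_bivec bivec_linear_left) simp
qed

lemma pbr_diff_left:
  assumes "f \<in> poly_fun N K" "g \<in> poly_fun N K"
  shows "pbr N K (\<lambda>x. f x - g x) h x = pbr N K f h x - pbr N K g h x"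
proof -
  from assms have "pdiff (\<lambda>x. f x - g x) x = (\<lambda>u. 1 * pdiff f x u + (-1) * pdiff g x u)"
    by (auto simp: pdiff_diff[where N = N and K = K])
  then show ?thesis by (simp only: pbr_eq_bivec bivec_linear_left) simp
qed

lemma pbr_cmult_left: "f \<in> poly_fun N K \<Longrightarrow> pbr N K (\<lambda>x. c * f x) h x = c * pbr N K f h x"
  using pbr_mult_left[of "\<lambda>x. c" N K f h x] by (simp add: poly_fun.pf_const)

lemma pbr_sum_left:
  assumes "finite A" and "\<And>i. i \<in> A \<Longrightarrow> F i \<in> poly_fun N K"
  shows "pbr N K (\<lambda>x. \<Sum>i\<in>A. F i x) h x = (\<Sum>i\<in>A. pbr N K (F i) h x)"
  using assms
proof (induction A rule: finite_induct)
  case (insert a A)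
  then have "pbr N K (\<lambda>x. F a x + (\<Sum>i\<in>A. F i x)) h x = pbr N K (F a) h x + pbr N K (\<lambda>x. \<Sum>i\<in>A. F i x) h x"
    by (intro pbr_add_left poly_fun_sum) auto
  with insert show ?case by simp
qed simp

lemma pbr_mult_right:
  "f \<in> poly_fun N K \<Longrightarrow> g \<in> poly_fun N K \<Longrightarrow>
   pbr N K h (\<lambda>x. f x * g x) x = f x * pbr N K h g x + g x * pbr N K h f x"
  by (subst (1 2 3) pbr_skew) (simp add: pbr_mult_left)

lemma pbr_add_right:
  "f \<in> poly_fun N K \<Longrightarrow> g \<in> poly_fun N K \<Longrightarrow> pbr N K h (\<lambda>x. f x + g x) x = pbr N K h f x + pbr N K h g x"
  by (subst (1 2 3) pbr_skew) (simp add: pbr_add_left)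

lemma pbr_diff_right:
  "f \<in> poly_fun N K \<Longrightarrow> g \<in> poly_fun N K \<Longrightarrow> pbr N K h (\<lambda>x. f x - g x) x = pbr N K h f x - pbr N K h g x"
  by (subst (1 2 3) pbr_skew) (simp add: pbr_diff_left)

lemma pbr_cmult_right: "f \<in> poly_fun N K \<Longrightarrow> pbr N K h (\<lambda>x. c * f x) x = c * pbr N K h f x"
  by (subst (1 2) pbr_skew) (simp add: pbr_cmult_left)

lemma pbr_sum_right:
  "finite A \<Longrightarrow> (\<And>i. i \<in> A \<Longrightarrow> F i \<in> poly_fun N K) \<Longrightarrow>
   pbr N K h (\<lambda>x. \<Sum>i\<in>A. F i x) x = (\<Sum>i\<in>A. pbr N K h (F i) x)"
  by (subst pbr_skew) (simp add: pbr_sum_left sum_negf pbr_skew[of N K h])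

lemma pbr_ps_right: "m < N \<Longrightarrow> d < K \<Longrightarrow> pbr N K f (\<lambda>x. ps x m d) x = - pdiff f x (CPsib d m)"
  by (simp add: pbr_eq_bivec bivec_def pdiff_ps if_distrib sum.delta' cong: if_cong)

lemma pbr_pb_right:
  assumes "l < N" "c < K"
  shows "pbr N K f (\<lambda>x. pb x c l) x = pdiff f x (CPsi l c)"
proof -
  have "(\<Sum>i<N. \<Sum>a<K. pdiff f x (CPsi i a) * (if CPsib a i = CPsib c l then 1 else 0)
      - pdiff f x (CPsib a i) * (if CPsi i a = CPsib c l then 1 else 0))
     = (\<Sum>i<N. \<Sum>a<K. if i = l \<and> a = c then pdiff f x (CPsi i a) else 0)"
    by (intro sum.cong refl) auto
  with assms show ?thesis by (simp add: pbr_eq_bivec bivec_def pdiff_pb)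
qed

lemma pbr_Bm_right:
  assumes "p < N" "q < N"
  shows "pbr N K f (\<lambda>x. Bm x p q) x = (\<Sum>m<N. \<Sum>n<N. pdiff f x (CB m n) * Bbr K x m n p q)"
proof -
  have "(\<Sum>m<N. \<Sum>n<N. \<Sum>r<N. \<Sum>s<N. pdiff f x (CB m n) * (if CB r s = CB p q then 1 else 0) * Bbr K x m n r s)
     = (\<Sum>m<N. \<Sum>n<N. \<Sum>r<N. \<Sum>s<N. if r = p \<and> s = q then pdiff f x (CB m n) * Bbr K x m n r s else 0)"
    by (intro sum.cong refl) auto
  with assms show ?thesis by (simp add: pbr_eq_bivec bivec_def pdiff_Bm)
qed

lemma pbr_ps_left: "i < N \<Longrightarrow> a < K \<Longrightarrow> pbr N K (\<lambda>x. ps x i a) g x = pdiff g x (CPsib a i)"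
  by (subst pbr_skew) (simp add: pbr_ps_right)

lemma pbr_pb_left: "i < N \<Longrightarrow> a < K \<Longrightarrow> pbr N K (\<lambda>x. pb x a i) g x = - pdiff g x (CPsi i a)"
  by (subst pbr_skew) (simp add: pbr_pb_right)

lemma pbr_Bm_left:
  "m < N \<Longrightarrow> n < N \<Longrightarrow> pbr N K (\<lambda>x. Bm x m n) g x = (\<Sum>p<N. \<Sum>q<N. pdiff g x (CB p q) * Bbr K x m n p q)"
  by (subst pbr_skew) (simp add: pbr_Bm_right Bbr_swap[of K x m n] sum_negf[symmetric])

lemma pbr_uminus_right: "f \<in> poly_fun N K \<Longrightarrow> pbr N K h (\<lambda>x. - f x) x = - pbr N K h f x"
  using pbr_cmult_right[of f N K h "-1" x] by simp

lemma pbr_ps_ps: "j < N \<Longrightarrow> b < K \<Longrightarrow> m < N \<Longrightarrow> d < K \<Longrightarrow> pbr N K (\<lambda>x. ps x j b) (\<lambda>x. ps x m d) x = 0"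
  by (simp add: pbr_ps_right pdiff_ps)

lemma pbr_pb_ps: "i < N \<Longrightarrow> a < K \<Longrightarrow> m < N \<Longrightarrow> d < K \<Longrightarrow>
   pbr N K (\<lambda>x. pb x a i) (\<lambda>x. ps x m d) x = - (if i = m \<and> a = d then 1 else 0)"
  by (simp add: pbr_ps_right pdiff_pb)

lemma pbr_ps_pb: "j < N \<Longrightarrow> b < K \<Longrightarrow> l < N \<Longrightarrow> c < K \<Longrightarrow>
   pbr N K (\<lambda>x. ps x j b) (\<lambda>x. pb x c l) x = (if j = l \<and> b = c then 1 else 0)"
  by (simp add: pbr_pb_right pdiff_ps)

lemma pbr_pb_pb: "i < N \<Longrightarrow> a < K \<Longrightarrow> l < N \<Longrightarrow> c < K \<Longrightarrow> pbr N K (\<lambda>x. pb x a i) (\<lambda>x. pb x c l) x = 0"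
  by (simp add: pbr_pb_right pdiff_pb)

lemma pbr_const_fun: "pbr N K h (\<lambda>x. c) = (\<lambda>x. 0)" "pbr N K (\<lambda>x. c) h = (\<lambda>x. 0)"
  by (rule ext, simp)+

lemma pbr_add_left_fun:
  "f \<in> poly_fun N K \<Longrightarrow> g \<in> poly_fun N K \<Longrightarrow> pbr N K (\<lambda>x. f x + g x) h = (\<lambda>x. pbr N K f h x + pbr N K g h x)"
  by (rule ext) (simp add: pbr_add_left)

lemma pbr_add_right_fun:
  "f \<in> poly_fun N K \<Longrightarrow> g \<in> poly_fun N K \<Longrightarrow> pbr N K h (\<lambda>x. f x + g x) = (\<lambda>x. pbr N K h f x + pbr N K h g x)"
  by (rule ext) (simp add: pbr_add_right)

lemma pbr_mult_left_fun:
  "f \<in> poly_fun N K \<Longrightarrow> g \<in> poly_fun N K \<Longrightarrow>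
   pbr N K (\<lambda>x. f x * g x) h = (\<lambda>x. f x * pbr N K g h x + g x * pbr N K f h x)"
  by (rule ext) (simp add: pbr_mult_left)

lemma pbr_mult_right_fun:
  "f \<in> poly_fun N K \<Longrightarrow> g \<in> poly_fun N K \<Longrightarrow>
   pbr N K h (\<lambda>x. f x * g x) = (\<lambda>x. f x * pbr N K h g x + g x * pbr N K h f x)"
  by (rule ext) (simp add: pbr_mult_right)

lemma pbr_expansion_left:
  "f \<in> poly_fun N K \<Longrightarrow> pbr N K f h x = (\<Sum>u\<in>coords N K. pdiff f x u * pbr N K (\<lambda>y. coord_val y u) h x)"
  by (rule derivation_expansion[where D = "\<lambda>f. pbr N K f h"]) (auto simp: pbr_add_left pbr_mult_left)

lemma pbr_coord_pair:
  assumes "w \<in> coords N K" "z \<in> coords N K"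
  shows "pbr N K (\<lambda>y. coord_val y w) (\<lambda>y. coord_val y z) = (case w of
      CB m n \<Rightarrow> (case z of CB p q \<Rightarrow> (\<lambda>y. Bbr K y m n p q) | _ \<Rightarrow> (\<lambda>y. 0))
    | CPsi i a \<Rightarrow> (\<lambda>y. if z = CPsib a i then 1 else 0)
    | CPsib a i \<Rightarrow> (\<lambda>y. - (if z = CPsi i a then 1 else 0)))"
proof (rule ext, cases w)
  case (CB m n)
  fix y
  have "pbr N K (\<lambda>y. coord_val y w) (\<lambda>y. coord_val y z) y
      = (\<Sum>p<N. \<Sum>q<N. (if CB p q = z then 1 else 0) * Bbr K y m n p q)"
    using CB assms(1) by (simp add: pbr_Bm_left pdiff_coord)
  also have "\<dots> = (case z of CB p q \<Rightarrow> Bbr K y m n p q | _ \<Rightarrow> 0)"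
    using assms(2) by (cases z) (simp_all add: mult_delta cong: if_cong)
  finally show "pbr N K (\<lambda>y. coord_val y w) (\<lambda>y. coord_val y z) y = (case w of
      CB m n \<Rightarrow> (case z of CB p q \<Rightarrow> (\<lambda>y. Bbr K y m n p q) | _ \<Rightarrow> (\<lambda>y. 0))
    | CPsi i a \<Rightarrow> (\<lambda>y. if z = CPsib a i then 1 else 0)
    | CPsib a i \<Rightarrow> (\<lambda>y. - (if z = CPsi i a then 1 else 0))) y"
    using CB by (cases z) simp_all
qed (use assms in \<open>auto simp: pbr_ps_left pbr_pb_left pdiff_coord eq_commute\<close>)

section \<open>Brackets of \<open>Bt\<close> and its powers\<close>

lemma Bt_eq: "(\<lambda>x. Bt K x p q) = (\<lambda>x. Bm x p q + (\<Sum>b<K. ps x p b * pb x b q))"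
  by (simp add: Bt_def)

lemma poly_fun_Bt: "p < N \<Longrightarrow> q < N \<Longrightarrow> (\<lambda>x. Bt K x p q) \<in> poly_fun N K"
  unfolding Bt_eq by (intro poly_fun.intros poly_fun_sum) (auto intro!: poly_fun.intros)

lemma pdiff_Bt:
  assumes "p < N" "q < N"
  shows "pdiff (\<lambda>x. Bt K x p q) x u = (if u = CB p q then 1 else 0)
     + (\<Sum>b<K. ps x p b * (if u = CPsib b q then 1 else 0) + (if u = CPsi p b then 1 else 0) * pb x b q)"
proof -
  have "pdiff (\<lambda>x. \<Sum>b<K. ps x p b * pb x b q) x u = (\<Sum>b<K. pdiff (\<lambda>x. ps x p b * pb x b q) x u)"
    by (rule pdiff_sum[where N = N and K = K]) (use assms in \<open>auto intro!: poly_fun.intros\<close>)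
  also have "\<dots> = (\<Sum>b<K. ps x p b * (if u = CPsib b q then 1 else 0) +
      (if u = CPsi p b then 1 else 0) * pb x b q)"
    by (intro sum.cong refl, subst pdiff_mult[where N = N and K = K])
       (use assms in \<open>auto intro!: poly_fun.intros simp: pdiff_ps pdiff_pb\<close>)
  finally show ?thesis unfolding Bt_eq
    by (subst pdiff_add[where N = N and K = K])
        (use assms in \<open>auto intro!: poly_fun_sum poly_fun.intros simp: pdiff_Bm\<close>)
qed

lemma pbr_ps_Bt:
  "i < N \<Longrightarrow> a < K \<Longrightarrow> p < N \<Longrightarrow> q < N \<Longrightarrow>
   pbr N K (\<lambda>x. ps x i a) (\<lambda>x. Bt K x p q) x = (if i = q then ps x p a else 0)"
  by (simp add: pbr_ps_left pdiff_Bt[where N = N] mult_delta cong: if_cong)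

lemma pbr_pb_Bt:
  "i < N \<Longrightarrow> a < K \<Longrightarrow> p < N \<Longrightarrow> q < N \<Longrightarrow>
   pbr N K (\<lambda>x. pb x a i) (\<lambda>x. Bt K x p q) x = - (if i = p then pb x a q else 0)"
  by (simp add: pbr_pb_left pdiff_Bt[where N = N] mult_delta cong: if_cong)

lemma pbr_Bm_Bt:
  "m < N \<Longrightarrow> n < N \<Longrightarrow> p < N \<Longrightarrow> q < N \<Longrightarrow> pbr N K (\<lambda>x. Bm x m n) (\<lambda>x. Bt K x p q) x = Bbr K x m n p q"
  by (simp add: pbr_Bm_left pdiff_Bt[where N = N] mult_delta cong: if_cong)

text \<open>The bracket of \<open>B\<close> with itself is cancelled by the brackets involving the
  \<open>\<psi>\<psi>\<close>-part of \<open>Bt\<close>.\<close>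

lemma pbr_Bt_Bt:
  assumes "m < N" "n < N" "p < N" "q < N"
  shows "pbr N K (\<lambda>x. Bt K x m n) (\<lambda>x. Bt K x p q) x = 0"
proof -
  have "pbr N K (\<lambda>x. Bt K x m n) (\<lambda>x. Bt K x p q) x
     = pbr N K (\<lambda>x. Bm x m n) (\<lambda>x. Bt K x p q) x +
         (\<Sum>b<K. pbr N K (\<lambda>x. ps x m b * pb x b n) (\<lambda>x. Bt K x p q) x)"
    unfolding Bt_eq[of K m n]
    by (subst pbr_add_left, (use assms in \<open>auto intro!: poly_fun.intros poly_fun_sum\<close>)[2],
        subst pbr_sum_left, (use assms in \<open>auto intro!: poly_fun.intros\<close>)[2]) (rule refl)
  also have "(\<Sum>b<K. pbr N K (\<lambda>x. ps x m b * pb x b n) (\<lambda>x. Bt K x p q) x)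
     = (\<Sum>b<K. ps x m b * (- (if n = p then pb x b q else 0)) + pb x b n * (if m = q then ps x p b else 0))"
    by (intro sum.cong refl, subst pbr_mult_left)
       (use assms in \<open>auto intro!: poly_fun.intros simp: pbr_ps_Bt pbr_pb_Bt\<close>)
  finally show ?thesis using assms
    by (cases "n = p"; cases "m = q")
        (simp_all add: pbr_Bm_Bt Bbr_def sum.distrib sum_subtractf sum_negf algebra_simps)
qed

definition Btpow :: "nat \<Rightarrow> nat \<Rightarrow> nat \<Rightarrow> nat \<Rightarrow> nat \<Rightarrow> rep \<Rightarrow> complex" where
  "Btpow N K k i j = (\<lambda>x. mpow N (Bt K x) k i j)"

definition Btpow_psi :: "nat \<Rightarrow> nat \<Rightarrow> rep \<Rightarrow> nat \<Rightarrow> nat \<Rightarrow> nat \<Rightarrow> complex" where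
  "Btpow_psi N K x s a l = (\<Sum>r<N. mpow N (Bt K x) s l r * ps x r a)"

definition psib_Btpow :: "nat \<Rightarrow> nat \<Rightarrow> rep \<Rightarrow> nat \<Rightarrow> nat \<Rightarrow> nat \<Rightarrow> complex" where
  "psib_Btpow N K x s a l = (\<Sum>r<N. pb x a r * mpow N (Bt K x) s r l)"

lemma Btpow_Suc: "Btpow N K (Suc k) i j = (\<lambda>x. \<Sum>r<N. Btpow N K k i r x * Bt K x r j)"
  by (simp add: Btpow_def mmul_def)

lemma Btpow_0: "Btpow N K 0 i j = (\<lambda>x. if i = j then 1 else 0)"
  by (simp add: Btpow_def)

lemma poly_fun_Btpow: "j < N \<Longrightarrow> Btpow N K k i j \<in> poly_fun N K"
proof (induction k arbitrary: j)
  case 0 then show ?case by (simp add: Btpow_0 poly_fun.pf_const)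
next
  case (Suc k) then show ?case unfolding Btpow_Suc
    by (intro poly_fun_sum poly_fun.pf_mult poly_fun_Bt) auto
qed

lemma poly_fun_mpow_Bt[intro]: "j < N \<Longrightarrow> (\<lambda>x. mpow N (Bt K x) k i j) \<in> poly_fun N K"
  using poly_fun_Btpow[of j N K k i] by (simp add: Btpow_def)

lemma pbr_ps_Btpow: "i < N \<Longrightarrow> a < K \<Longrightarrow> m < N \<Longrightarrow>
  pbr N K (\<lambda>x. ps x i a) (Btpow N K k l m) x =
      (\<Sum>s<k. Btpow_psi N K x s a l * mpow N (Bt K x) (k - 1 - s) i m)"
proof (induction k arbitrary: m)
  case 0 then show ?case by (simp add: Btpow_0)
next
  case (Suc k)
  have "pbr N K (\<lambda>x. ps x i a) (Btpow N K (Suc k) l m) x =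
      (\<Sum>r<N. pbr N K (\<lambda>x. ps x i a) (\<lambda>x. Btpow N K k l r x * Bt K x r m) x)"
    unfolding Btpow_Suc by (rule pbr_sum_right)
        (use Suc.prems in \<open>auto intro!: poly_fun.intros poly_fun_Btpow poly_fun_Bt\<close>)
  also have "\<dots> = (\<Sum>r<N. Btpow N K k l r x * (if i = m then ps x r a else 0) + Bt K x r m *
      (\<Sum>s<k. Btpow_psi N K x s a l * mpow N (Bt K x) (k - 1 - s) i r))"
    by (intro sum.cong refl, subst pbr_mult_right)
        (use Suc in \<open>auto intro!: poly_fun_Btpow poly_fun_Bt simp: pbr_ps_Bt\<close>)
  also have "\<dots> = (if i = m then Btpow_psi N K x k a l else 0) +
      (\<Sum>s<k. Btpow_psi N K x s a l * (\<Sum>r<N. mpow N (Bt K x) (k - 1 - s) i r * Bt K x r m))"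
  proof -
    have delta_term: "(\<Sum>r<N. Btpow N K k l r x * (if i = m then ps x r a else 0)) =
        (if i = m then Btpow_psi N K x k a l else 0)"
      by (simp add: Btpow_psi_def Btpow_def)
    have power_term: "(\<Sum>r<N. Bt K x r m * (\<Sum>s<k. Btpow_psi N K x s a l * mpow N (Bt K x) (k - 1 - s) i r))
       = (\<Sum>s<k. Btpow_psi N K x s a l * (\<Sum>r<N. mpow N (Bt K x) (k - 1 - s) i r * Bt K x r m))"
      by (simp add: sum_distrib_left sum.swap[of _ "{..<N}"] algebra_simps)
    show ?thesis by (simp only: sum.distrib delta_term power_term)
  qed
  also have "\<dots> = (if i = m then Btpow_psi N K x k a l else 0) +
      (\<Sum>s<k. Btpow_psi N K x s a l * mpow N (Bt K x) (k - s) i m)"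
    by (intro arg_cong2[where f="(+)"] refl sum.cong) (auto simp: mpow_Suc_apply[symmetric] Suc_diff_Suc)
  finally show ?case by simp
qed

lemma psib_Btpow_Suc: "psib_Btpow N K x (Suc j) a m = (\<Sum>r<N. psib_Btpow N K x j a r * Bt K x r m)"
proof -
  have "psib_Btpow N K x (Suc j) a m = (\<Sum>r<N. \<Sum>t<N. pb x a r * mpow N (Bt K x) j r t * Bt K x t m)"
    by (simp del: mpow.simps add: psib_Btpow_def mpow_Suc_apply sum_distrib_left mult.assoc)
  also have "\<dots> = (\<Sum>t<N. \<Sum>r<N. pb x a r * mpow N (Bt K x) j r t * Bt K x t m)"
    by (rule sum.swap)
  finally show ?thesis by (simp add: psib_Btpow_def sum_distrib_right)
qed

lemma psib_Btpow_0: "m < N \<Longrightarrow> psib_Btpow N K x 0 a m = pb x a m"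
  by (simp add: psib_Btpow_def mult_delta cong: if_cong)

lemma pbr_pb_Btpow: "i < N \<Longrightarrow> a < K \<Longrightarrow> m < N \<Longrightarrow>
  pbr N K (\<lambda>x. pb x a i) (Btpow N K k l m) x = -
      (\<Sum>s<k. mpow N (Bt K x) s l i * psib_Btpow N K x (k - 1 - s) a m)"
proof (induction k arbitrary: m)
  case 0 then show ?case by (simp add: Btpow_0)
next
  case (Suc k)
  have "pbr N K (\<lambda>x. pb x a i) (Btpow N K (Suc k) l m) x =
      (\<Sum>r<N. pbr N K (\<lambda>x. pb x a i) (\<lambda>x. Btpow N K k l r x * Bt K x r m) x)"
    unfolding Btpow_Suc by (rule pbr_sum_right)
        (use Suc.prems in \<open>auto intro!: poly_fun.intros poly_fun_Btpow poly_fun_Bt\<close>)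
  also have "\<dots> = (\<Sum>r<N. Btpow N K k l r x * (- (if i = r then pb x a m else 0)) + Bt K x r m *
      (- (\<Sum>s<k. mpow N (Bt K x) s l i * psib_Btpow N K x (k - 1 - s) a r)))"
    by (intro sum.cong refl, subst pbr_mult_right)
        (use Suc in \<open>auto intro!: poly_fun_Btpow poly_fun_Bt simp: pbr_pb_Bt\<close>)
  also have "\<dots> = - (mpow N (Bt K x) k l i * psib_Btpow N K x 0 a m) -
      (\<Sum>s<k. mpow N (Bt K x) s l i * (\<Sum>r<N. psib_Btpow N K x (k - 1 - s) a r * Bt K x r m))"
  proof -
    have delta_term: "(\<Sum>r<N. Btpow N K k l r x * (- (if i = r then pb x a m else 0))) = -
        (mpow N (Bt K x) k l i * psib_Btpow N K x 0 a m)"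
      using Suc.prems by (simp add: Btpow_def psib_Btpow_0 if_distrib cong: if_cong)
    have power_term: "(\<Sum>r<N. Bt K x r m *
        (- (\<Sum>s<k. mpow N (Bt K x) s l i * psib_Btpow N K x (k - 1 - s) a r)))
       = - (\<Sum>s<k. mpow N (Bt K x) s l i * (\<Sum>r<N. psib_Btpow N K x (k - 1 - s) a r * Bt K x r m))"
      by (simp add: sum_distrib_left sum_negf sum.swap[of _ "{..<N}"] algebra_simps)
    show ?thesis by (simp only: sum.distrib delta_term power_term) simp
  qed
  also have "\<dots> = - (mpow N (Bt K x) k l i * psib_Btpow N K x 0 a m) -
      (\<Sum>s<k. mpow N (Bt K x) s l i * psib_Btpow N K x (k - s) a m)"
    by (intro arg_cong2[where f="(-)"] refl sum.cong) (auto simp: psib_Btpow_Suc[symmetric] Suc_diff_Suc)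
  finally show ?case by (simp add: algebra_simps)
qed

lemma pbr_Bt_Btpow: "p < N \<Longrightarrow> q < N \<Longrightarrow> m < N \<Longrightarrow>
  pbr N K (\<lambda>x. Bt K x p q) (Btpow N K k l m) x = 0"
proof (induction k arbitrary: m)
  case 0 then show ?case by (simp add: Btpow_0)
next
  case (Suc k)
  have "pbr N K (\<lambda>x. Bt K x p q) (Btpow N K (Suc k) l m) x =
      (\<Sum>r<N. pbr N K (\<lambda>x. Bt K x p q) (\<lambda>x. Btpow N K k l r x * Bt K x r m) x)"
    unfolding Btpow_Suc by (rule pbr_sum_right)
        (use Suc.prems in \<open>auto intro!: poly_fun.intros poly_fun_Btpow poly_fun_Bt\<close>)
  also have "\<dots> = 0"
    by (intro sum.neutral ballI, subst pbr_mult_right)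
        (use Suc in \<open>auto intro!: poly_fun_Btpow poly_fun_Bt simp: pbr_Bt_Bt\<close>)
  finally show ?case .
qed

lemma pbr_Btpow_Btpow: "j < N \<Longrightarrow> m < N \<Longrightarrow> pbr N K (Btpow N K k' i j) (Btpow N K k l m) x = 0"
proof (induction k' arbitrary: j)
  case 0 then show ?case by (simp add: Btpow_0)
next
  case (Suc k')
  have "pbr N K (Btpow N K (Suc k') i j) (Btpow N K k l m) x =
      (\<Sum>r<N. pbr N K (\<lambda>x. Btpow N K k' i r x * Bt K x r j) (Btpow N K k l m) x)"
    unfolding Btpow_Suc by (rule pbr_sum_left)
        (use Suc.prems in \<open>auto intro!: poly_fun.intros poly_fun_Btpow poly_fun_Bt\<close>)
  also have "\<dots> = 0"
    by (intro sum.neutral ballI, subst pbr_mult_left)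
        (use Suc in \<open>auto intro!: poly_fun_Btpow poly_fun_Bt simp: pbr_Bt_Btpow\<close>)
  finally show ?case .
qed

section \<open>Brackets of the functions \<open>t\<close>\<close>

definition t_unnorm :: "nat \<Rightarrow> nat \<Rightarrow> nat \<Rightarrow> nat \<Rightarrow> nat \<Rightarrow> rep \<Rightarrow> complex" where
  "t_unnorm N K n a d = (\<lambda>x. \<Sum>i<N. \<Sum>j<N. pb x a i * mpow N (Bt K x) n i j * ps x j d)"

lemma poly_fun_t_unnorm: "a < K \<Longrightarrow> d < K \<Longrightarrow> t_unnorm N K n a d \<in> poly_fun N K"
  unfolding t_unnorm_def by (intro poly_fun_sum poly_fun.pf_mult) (auto intro!: poly_fun.intros)

lemma tfun_eq_t_unnorm: "tfun N K k a b = (\<lambda>x. (1 / 2 ^ k) * t_unnorm N K k a b x)"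
  by (simp add: tfun_def t_unnorm_def)

lemma sum_pb_Btpow_psi: "(\<Sum>i<N. pb x a i * Btpow_psi N K x s d i) = t_unnorm N K s a d x"
  by (simp add: Btpow_psi_def t_unnorm_def sum_distrib_left mult.assoc)

lemma sum_psib_Btpow_ps: "(\<Sum>j<N. psib_Btpow N K x n c j * ps x j b) = t_unnorm N K n c b x"
proof -
  have "(\<Sum>j<N. psib_Btpow N K x n c j * ps x j b) =
      (\<Sum>j<N. \<Sum>r<N. pb x c r * mpow N (Bt K x) n r j * ps x j b)"
    by (simp add: psib_Btpow_def sum_distrib_right)
  also have "\<dots> = (\<Sum>r<N. \<Sum>j<N. pb x c r * mpow N (Bt K x) n r j * ps x j b)"
    by (rule sum.swap)
  finally show ?thesis by (simp add: t_unnorm_def)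
qed

lemma sum_pb_mpow_mpow: "m < N \<Longrightarrow>
    (\<Sum>i<N. pb x a i * (\<Sum>j<N. mpow N (Bt K x) p i j * mpow N (Bt K x) r j m)) = psib_Btpow N K x (p + r) a m"
  by (simp add: sum_mpow_mpow psib_Btpow_def)

lemma sum_mpow_Btpow_psi: "(\<Sum>i<N. mpow N (Bt K x) s l i * Btpow_psi N K x p b i) = Btpow_psi N K x
    (s + p) b l"
proof -
  have "(\<Sum>i<N. mpow N (Bt K x) s l i * Btpow_psi N K x p b i) =
      (\<Sum>i<N. \<Sum>j<N. mpow N (Bt K x) s l i * mpow N (Bt K x) p i j * ps x j b)"
    by (simp add: Btpow_psi_def sum_distrib_left mult.assoc)
  also have "\<dots> = (\<Sum>j<N. \<Sum>i<N. mpow N (Bt K x) s l i * mpow N (Bt K x) p i j * ps x j b)"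
    by (rule sum.swap)
  also have "\<dots> = (\<Sum>j<N. mpow N (Bt K x) (s + p) l j * ps x j b)"
    by (intro sum.cong refl) (simp add: sum_mpow_mpow[symmetric] sum_distrib_right)
  finally show ?thesis by (simp add: Btpow_psi_def)
qed

lemma sum_psib_Btpow_mpow:
  assumes m: "m < N"
  shows "(\<Sum>l<N. psib_Btpow N K x r a l * mpow N (Bt K x) q l m) = psib_Btpow N K x (r + q) a m"
proof -
  have "(\<Sum>l<N. psib_Btpow N K x r a l * mpow N (Bt K x) q l m) =
      (\<Sum>l<N. \<Sum>i<N. pb x a i * mpow N (Bt K x) r i l * mpow N (Bt K x) q l m)"
    by (simp add: psib_Btpow_def sum_distrib_right)
  also have "\<dots> = (\<Sum>i<N. \<Sum>l<N. pb x a i * mpow N (Bt K x) r i l * mpow N (Bt K x) q l m)"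
    by (rule sum.swap)
  also have "\<dots> = (\<Sum>i<N. pb x a i * mpow N (Bt K x) (r + q) i m)"
    by (intro sum.cong refl) (simp add: sum_mpow_mpow[symmetric, OF m] sum_distrib_left mult.assoc)
  finally show ?thesis by (simp add: psib_Btpow_def)
qed

lemma t_unnorm_eq: "t_unnorm N K n a b = (\<lambda>x. \<Sum>i<N. \<Sum>j<N. (pb x a i * Btpow N K n i j x) * ps x j b)"
  by (simp add: t_unnorm_def Btpow_def)

lemma pbr_t_unnorm_left:
  assumes "a < K" "b < K"
  shows "pbr N K (t_unnorm N K p a b) h x =
      (\<Sum>i<N. \<Sum>j<N. pb x a i * mpow N (Bt K x) p i j * pbr N K (\<lambda>x. ps x j b) h x
        + ps x j b * (pb x a i * pbr N K (Btpow N K p i j) h x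
                      + mpow N (Bt K x) p i j * pbr N K (\<lambda>x. pb x a i) h x))"
    (is "_ = (\<Sum>i<N. \<Sum>j<N. ?S i j)")
proof -
  have factors: "(\<lambda>x. pb x a i) \<in> poly_fun N K" "Btpow N K p i j \<in> poly_fun N K"
      "(\<lambda>x. ps x j b) \<in> poly_fun N K"
    if "i < N" "j < N" for i j
    using that assms by (auto intro: poly_fun.intros poly_fun_Btpow)
  have "pbr N K (t_unnorm N K p a b) h x =
      (\<Sum>i<N. pbr N K (\<lambda>x. \<Sum>j<N. (pb x a i * Btpow N K p i j x) * ps x j b) h x)"
    unfolding t_unnorm_eq by (rule pbr_sum_left) (auto intro!: poly_fun_sum poly_fun.pf_mult factors)
  also have "\<dots> = (\<Sum>i<N. \<Sum>j<N. pbr N K (\<lambda>x. (pb x a i * Btpow N K p i j x) * ps x j b) h x)"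
    by (intro sum.cong refl pbr_sum_left) (auto intro!: poly_fun.pf_mult factors)
  also have "\<dots> = (\<Sum>i<N. \<Sum>j<N. ?S i j)"
  proof (intro sum.cong refl)
    fix i j assume "i \<in> {..<N}" "j \<in> {..<N}"
    then have ij: "i < N" "j < N" by auto
    have "pbr N K (\<lambda>x. pb x a i * Btpow N K p i j x * ps x j b) h x
        = pb x a i * Btpow N K p i j x * pbr N K (\<lambda>x. ps x j b) h x
        + ps x j b * pbr N K (\<lambda>x. pb x a i * Btpow N K p i j x) h x"
      by (rule pbr_mult_left) (use ij in \<open>auto intro!: poly_fun.pf_mult factors\<close>)
    moreover have "pbr N K (\<lambda>x. pb x a i * Btpow N K p i j x) h x
        = pb x a i * pbr N K (Btpow N K p i j) h x + Btpow N K p i j x * pbr N K (\<lambda>x. pb x a i) h x"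
      by (rule pbr_mult_left) (auto intro: factors ij)
    ultimately show "pbr N K (\<lambda>x. pb x a i * Btpow N K p i j x * ps x j b) h x = ?S i j"
      by (simp add: Btpow_def)
  qed
  finally show ?thesis .
qed

lemma pbr_t_unnorm_right:
  assumes "c < K" "d < K"
  shows "pbr N K h (t_unnorm N K q c d) x =
      (\<Sum>l<N. \<Sum>m<N. pb x c l * mpow N (Bt K x) q l m * pbr N K h (\<lambda>x. ps x m d) x
     + ps x m d * (pb x c l * pbr N K h (Btpow N K q l m) x + mpow N (Bt K x) q l m * pbr N K h
         (\<lambda>x. pb x c l) x))"
  by (subst pbr_skew, subst pbr_t_unnorm_left[OF assms])
     (simp add: sum_negf[symmetric] pbr_skew[of N K h] algebra_simps)

lemma pbr_t_unnorm_ps: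
  assumes "a < K" "b < K" "m < N" "d < K"
  shows "pbr N K (t_unnorm N K p a b) (\<lambda>x. ps x m d) x
    = - (if a = d then Btpow_psi N K x p b m else 0) -
        (\<Sum>s<p. t_unnorm N K s a d x * Btpow_psi N K x (p - 1 - s) b m)"
proof -
  let ?M = "mpow N (Bt K x)"
  have "pbr N K (t_unnorm N K p a b) (\<lambda>x. ps x m d) x = (\<Sum>i<N. \<Sum>j<N.
      ps x j b * (pb x a i * (- (\<Sum>s<p. Btpow_psi N K x s d i * ?M (p - 1 - s) m j)) + ?M p i j *
          (- (if i = m \<and> a = d then 1 else 0))))"
    using assms by (simp add: pbr_t_unnorm_left pbr_ps_ps pbr_pb_ps
        pbr_skew[of N K "Btpow N K p _ _"] pbr_ps_Btpow del: mult_minus_right mult_minus_left)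
  also have "\<dots> = - (\<Sum>s<p. (\<Sum>i<N. pb x a i * Btpow_psi N K x s d i) * (\<Sum>j<N. ?M (p - 1 - s) m j * ps x j b))
        - (\<Sum>i<N. \<Sum>j<N. if i = m \<and> a = d then ps x j b * ?M p i j else 0)"
  proof -
    have "(\<Sum>i<N. \<Sum>j<N. ps x j b * (pb x a i * (- (\<Sum>s<p. Btpow_psi N K x s d i * ?M (p - 1 - s) m j))))
      = - (\<Sum>i<N. \<Sum>j<N. \<Sum>s<p. (pb x a i * Btpow_psi N K x s d i) * (?M (p - 1 - s) m j * ps x j b))"
      by (simp add: sum_negf sum_distrib_left algebra_simps)
    also have "\<dots> = - (\<Sum>s<p. \<Sum>i<N. \<Sum>j<N. (pb x a i * Btpow_psi N K x s d i) *
        (?M (p - 1 - s) m j * ps x j b))"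
      by (simp add: sum.swap[of _ "{..<p}"])
    also have "\<dots> = - (\<Sum>s<p. (\<Sum>i<N. pb x a i * Btpow_psi N K x s d i) *
        (\<Sum>j<N. ?M (p - 1 - s) m j * ps x j b))"
      by (simp add: sum_product)
    finally show ?thesis
      by (simp add: sum.distrib sum_subtractf ring_distribs if_distrib[of "\<lambda>z. _ * z"] cong: if_cong)
  qed
  also have "\<dots> = - (\<Sum>s<p. t_unnorm N K s a d x * Btpow_psi N K x (p - 1 - s) b m) -
      (if a = d then Btpow_psi N K x p b m else 0)"
    using assms by (simp only: sum_pb_Btpow_psi) (cases "a = d"; simp add: Btpow_psi_def mult.commute)
  finally show ?thesis by simp
qed

lemma pbr_t_unnorm_pb:
  assumes "a < K" "b < K" "l < N" "c < K"
  shows "pbr N K (t_unnorm N K p a b) (\<lambda>x. pb x c l) x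
    = (if b = c then psib_Btpow N K x p a l else 0) +
        (\<Sum>s<p. psib_Btpow N K x s a l * t_unnorm N K (p - 1 - s) c b x)"
proof -
  let ?M = "mpow N (Bt K x)"
  have "pbr N K (t_unnorm N K p a b) (\<lambda>x. pb x c l) x = (\<Sum>i<N. \<Sum>j<N.
      pb x a i * ?M p i j * (if j = l \<and> b = c then 1 else 0) + ps x j b *
          (pb x a i * (\<Sum>s<p. ?M s i l * psib_Btpow N K x (p - 1 - s) c j)))"
    using assms by (simp add: pbr_t_unnorm_left pbr_ps_pb pbr_pb_pb
        pbr_skew[of N K "Btpow N K p _ _"] pbr_pb_Btpow del: mult_minus_right mult_minus_left)
  also have "\<dots> = (\<Sum>i<N. \<Sum>j<N. if j = l \<and> b = c then pb x a i * ?M p i j else 0)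
       + (\<Sum>s<p. (\<Sum>i<N. pb x a i * ?M s i l) * (\<Sum>j<N. psib_Btpow N K x (p - 1 - s) c j * ps x j b))"
  proof -
    have "(\<Sum>i<N. \<Sum>j<N. ps x j b * (pb x a i * (\<Sum>s<p. ?M s i l * psib_Btpow N K x (p - 1 - s) c j)))
      = (\<Sum>i<N. \<Sum>j<N. \<Sum>s<p. (pb x a i * ?M s i l) * (psib_Btpow N K x (p - 1 - s) c j * ps x j b))"
      by (simp add: sum_distrib_left algebra_simps)
    also have "\<dots> = (\<Sum>s<p. \<Sum>i<N. \<Sum>j<N. (pb x a i * ?M s i l) *
        (psib_Btpow N K x (p - 1 - s) c j * ps x j b))"
      by (simp add: sum.swap[of _ "{..<p}"])
    also have "\<dots> = (\<Sum>s<p. (\<Sum>i<N. pb x a i * ?M s i l) *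
        (\<Sum>j<N. psib_Btpow N K x (p - 1 - s) c j * ps x j b))"
      by (simp add: sum_product)
    finally have psi_part: "(\<Sum>i<N. \<Sum>j<N. ps x j b *
        (pb x a i * (\<Sum>s<p. ?M s i l * psib_Btpow N K x (p - 1 - s) c j)))
      = (\<Sum>s<p. (\<Sum>i<N. pb x a i * ?M s i l) * (\<Sum>j<N. psib_Btpow N K x (p - 1 - s) c j * ps x j b))" .
    have delta_part: "(\<Sum>i<N. \<Sum>j<N. pb x a i * ?M p i j * (if j = l \<and> b = c then 1 else 0))
       = (\<Sum>i<N. \<Sum>j<N. if j = l \<and> b = c then pb x a i * ?M p i j else 0)"
      by (intro sum.cong refl) auto
    show ?thesis by (simp only: sum.distrib psi_part delta_part)
  qed
  also have "\<dots> = (if b = c then psib_Btpow N K x p a l else 0) +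
      (\<Sum>s<p. psib_Btpow N K x s a l * t_unnorm N K (p - 1 - s) c b x)"
    using assms by (simp only: sum_psib_Btpow_ps) (cases "b = c"; simp add: psib_Btpow_def)
  finally show ?thesis .
qed

lemma pbr_t_unnorm_Btpow:
  assumes "a < K" "b < K" "m < N"
  shows "pbr N K (t_unnorm N K p a b) (Btpow N K q l m) x
    = (\<Sum>s<q. Btpow_psi N K x s b l * psib_Btpow N K x (p + (q - 1 - s)) a m)
      - (\<Sum>s<q. Btpow_psi N K x (s + p) b l * psib_Btpow N K x (q - 1 - s) a m)"
proof -
  let ?M = "mpow N (Bt K x)"
  have "pbr N K (t_unnorm N K p a b) (Btpow N K q l m) x = (\<Sum>i<N. \<Sum>j<N.
      pb x a i * ?M p i j * (\<Sum>s<q. Btpow_psi N K x s b l * ?M (q - 1 - s) j m)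
      - ps x j b * (?M p i j * (\<Sum>s<q. ?M s l i * psib_Btpow N K x (q - 1 - s) a m)))"
    using assms by (simp add: pbr_t_unnorm_left pbr_ps_Btpow pbr_pb_Btpow pbr_Btpow_Btpow del:
        mult_minus_right mult_minus_left)
  also have "\<dots> = (\<Sum>s<q. Btpow_psi N K x s b l * (\<Sum>i<N. pb x a i * (\<Sum>j<N. ?M p i j * ?M (q - 1 - s) j m)))
      - (\<Sum>s<q. (\<Sum>i<N. ?M s l i * Btpow_psi N K x p b i) * psib_Btpow N K x (q - 1 - s) a m)"
  proof -
    have left_part: "(\<Sum>i<N. \<Sum>j<N. pb x a i * ?M p i j * (\<Sum>s<q. Btpow_psi N K x s b l * ?M (q - 1 - s) j m))
       = (\<Sum>s<q. Btpow_psi N K x s b l * (\<Sum>i<N. pb x a i * (\<Sum>j<N. ?M p i j * ?M (q - 1 - s) j m)))"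
    proof -
      have "(\<Sum>i<N. \<Sum>j<N. pb x a i * ?M p i j * (\<Sum>s<q. Btpow_psi N K x s b l * ?M (q - 1 - s) j m))
        = (\<Sum>i<N. \<Sum>j<N. \<Sum>s<q. Btpow_psi N K x s b l * (pb x a i * (?M p i j * ?M (q - 1 - s) j m)))"
        by (simp add: sum_distrib_left algebra_simps)
      also have "\<dots> = (\<Sum>s<q. \<Sum>i<N. \<Sum>j<N. Btpow_psi N K x s b l *
          (pb x a i * (?M p i j * ?M (q - 1 - s) j m)))"
        by (simp add: sum.swap[of _ "{..<q}"])
      finally show ?thesis by (simp add: sum_distrib_left)
    qed
    have right_part: "(\<Sum>i<N. \<Sum>j<N. ps x j b *
        (?M p i j * (\<Sum>s<q. ?M s l i * psib_Btpow N K x (q - 1 - s) a m)))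
       = (\<Sum>s<q. (\<Sum>i<N. ?M s l i * Btpow_psi N K x p b i) * psib_Btpow N K x (q - 1 - s) a m)"
    proof -
      have "(\<Sum>i<N. \<Sum>j<N. ps x j b * (?M p i j * (\<Sum>s<q. ?M s l i * psib_Btpow N K x (q - 1 - s) a m)))
        = (\<Sum>i<N. \<Sum>s<q. \<Sum>j<N. (?M s l i * psib_Btpow N K x (q - 1 - s) a m) * (?M p i j * ps x j b))"
        by (simp add: sum_distrib_left sum.swap[of _ "{..<q}"] algebra_simps)
      also have "\<dots> = (\<Sum>s<q. \<Sum>i<N. (?M s l i * psib_Btpow N K x (q - 1 - s) a m) * Btpow_psi N K x p b i)"
        by (simp add: sum.swap[of _ "{..<q}"] sum_distrib_left[symmetric] Btpow_psi_def)
      finally show ?thesis by (simp add: sum_distrib_right sum_distrib_left algebra_simps)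
    qed
    show ?thesis by (simp only: sum_subtractf left_part right_part)
  qed
  also have "\<dots> = (\<Sum>s<q. Btpow_psi N K x s b l * psib_Btpow N K x (p + (q - 1 - s)) a m)
      - (\<Sum>s<q. Btpow_psi N K x (s + p) b l * psib_Btpow N K x (q - 1 - s) a m)"
    using assms by (simp only: sum_pb_mpow_mpow sum_mpow_Btpow_psi)
  finally show ?thesis .
qed

lemma sum_pb_mpow_Btpow_psi:
  "(\<Sum>l<N. \<Sum>m<N. pb x c l * mpow N (Bt K x) q l m * Btpow_psi N K x r b m) = t_unnorm N K (q + r) c b x"
  by (simp add: mult.assoc sum_distrib_left[symmetric] sum_mpow_Btpow_psi sum_pb_Btpow_psi)

lemma sum_psib_Btpow_mpow_ps:
  "(\<Sum>l<N. \<Sum>m<N. psib_Btpow N K x r a l * mpow N (Bt K x) q l m * ps x m d) = t_unnorm N K (r + q) a d x"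
proof -
  have "(\<Sum>l<N. \<Sum>m<N. psib_Btpow N K x r a l * mpow N (Bt K x) q l m * ps x m d)
      = (\<Sum>m<N. \<Sum>l<N. psib_Btpow N K x r a l * mpow N (Bt K x) q l m * ps x m d)"
    by (rule sum.swap)
  also have "\<dots> = (\<Sum>m<N. psib_Btpow N K x (r + q) a m * ps x m d)"
    by (intro sum.cong refl) (simp add: sum_distrib_right[symmetric] sum_psib_Btpow_mpow)
  finally show ?thesis by (simp add: sum_psib_Btpow_ps)
qed

lemma sum_pbr_t_unnorm_ps:
  assumes "a < K" "b < K" "d < K"
  shows "(\<Sum>l<N. \<Sum>m<N. pb x c l * mpow N (Bt K x) q l m * pbr N K (t_unnorm N K p a b) (\<lambda>x. ps x m d) x)
    = - (if a = d then t_unnorm N K (q + p) c b x else 0)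
      - (\<Sum>s<p. t_unnorm N K s a d x * t_unnorm N K (q + (p - 1 - s)) c b x)"
proof -
  let ?M = "mpow N (Bt K x)"
  have "(\<Sum>l<N. \<Sum>m<N. pb x c l * ?M q l m * pbr N K (t_unnorm N K p a b) (\<lambda>x. ps x m d) x)
    = (\<Sum>l<N. \<Sum>m<N. pb x c l * ?M q l m * (- (if a = d then Btpow_psi N K x p b m else 0)
        - (\<Sum>s<p. t_unnorm N K s a d x * Btpow_psi N K x (p - 1 - s) b m)))"
    using assms by (intro sum.cong refl) (simp add: pbr_t_unnorm_ps)
  also have "\<dots> = - (if a = d then (\<Sum>l<N. \<Sum>m<N. pb x c l * ?M q l m * Btpow_psi N K x p b m) else 0)
      - (\<Sum>s<p. t_unnorm N K s a d x * (\<Sum>l<N. \<Sum>m<N. pb x c l * ?M q l m * Btpow_psi N K x (p - 1 - s) b m))"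
    by (simp add: right_diff_distrib sum_subtractf sum_sum_mult_sum sum_negf)
  finally show ?thesis by (simp only: sum_pb_mpow_Btpow_psi)
qed

lemma sum_pbr_t_unnorm_Btpow:
  assumes "a < K" "b < K"
  shows "(\<Sum>l<N. \<Sum>m<N. ps x m d * (pb x c l * pbr N K (t_unnorm N K p a b) (Btpow N K q l m) x))
    = (\<Sum>s<q. t_unnorm N K s c b x * t_unnorm N K (p + (q - 1 - s)) a d x)
      - (\<Sum>s<q. t_unnorm N K (s + p) c b x * t_unnorm N K (q - 1 - s) a d x)"
proof -
  have "(\<Sum>l<N. \<Sum>m<N. ps x m d * (pb x c l * pbr N K (t_unnorm N K p a b) (Btpow N K q l m) x))
    = (\<Sum>l<N. \<Sum>m<N. ps x m d *
        (pb x c l * ((\<Sum>s<q. Btpow_psi N K x s b l * psib_Btpow N K x (p + (q - 1 - s)) a m)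
        - (\<Sum>s<q. Btpow_psi N K x (s + p) b l * psib_Btpow N K x (q - 1 - s) a m))))"
    using assms by (intro sum.cong refl) (simp add: pbr_t_unnorm_Btpow)
  also have "\<dots> = (\<Sum>s<q. \<Sum>l<N. \<Sum>m<N. (pb x c l * Btpow_psi N K x s b l) *
      (psib_Btpow N K x (p + (q - 1 - s)) a m * ps x m d))
      - (\<Sum>s<q. \<Sum>l<N. \<Sum>m<N. (pb x c l * Btpow_psi N K x (s + p) b l) *
          (psib_Btpow N K x (q - 1 - s) a m * ps x m d))"
    by (simp add: right_diff_distrib sum_subtractf sum_distrib_left sum_swap_outer3 algebra_simps)
  finally show ?thesis
    by (simp add: sum_product[symmetric] sum_pb_Btpow_psi sum_psib_Btpow_ps)
qed

lemma sum_pbr_t_unnorm_pb: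
  assumes "a < K" "b < K" "c < K"
  shows "(\<Sum>l<N. \<Sum>m<N. ps x m d * (mpow N (Bt K x) q l m * pbr N K (t_unnorm N K p a b) (\<lambda>x. pb x c l) x))
    = (if b = c then t_unnorm N K (p + q) a d x else 0)
      + (\<Sum>s<p. t_unnorm N K (p - 1 - s) c b x * t_unnorm N K (s + q) a d x)"
proof -
  let ?M = "mpow N (Bt K x)"
  have "(\<Sum>l<N. \<Sum>m<N. ps x m d * (?M q l m * pbr N K (t_unnorm N K p a b) (\<lambda>x. pb x c l) x))
    = (\<Sum>l<N. \<Sum>m<N. (if b = c then psib_Btpow N K x p a l * ?M q l m * ps x m d else 0))
      + (\<Sum>l<N. \<Sum>m<N. (ps x m d * ?M q l m) *
          (\<Sum>s<p. t_unnorm N K (p - 1 - s) c b x * psib_Btpow N K x s a l))"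
    using assms by (cases "b = c") (simp_all add: pbr_t_unnorm_pb distrib_left sum.distrib algebra_simps)
  also have "\<dots> = (if b = c then (\<Sum>l<N. \<Sum>m<N. psib_Btpow N K x p a l * ?M q l m * ps x m d) else 0)
      + (\<Sum>s<p. t_unnorm N K (p - 1 - s) c b x * (\<Sum>l<N. \<Sum>m<N. psib_Btpow N K x s a l * ?M q l m * ps x m d))"
    by (simp only: sum_sum_mult_sum) (simp add: algebra_simps)
  finally show ?thesis by (simp only: sum_psib_Btpow_mpow_ps)
qed

lemma pbr_t_unnorm_sums:
  assumes "a < K" "b < K" "c < K" "d < K"
  shows "pbr N K (t_unnorm N K p a b) (t_unnorm N K q c d) x =
    (if b = c then t_unnorm N K (p + q) a d x else 0) - (if a = d then t_unnorm N K (p + q) c b x else 0)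
    + (\<Sum>k<p. t_unnorm N K (p + q - 1 - k) a d x * t_unnorm N K k c b x - t_unnorm N K k a d x
        * t_unnorm N K (p + q - 1 - k) c b x)
    + (\<Sum>k<q. t_unnorm N K (p + q - 1 - k) a d x * t_unnorm N K k c b x - t_unnorm N K k a d x
        * t_unnorm N K (p + q - 1 - k) c b x)"
proof -
  let ?t = "\<lambda>n a d. t_unnorm N K n a d x"
  have r1: "(\<Sum>s<p. ?t (p - 1 - s) c b * ?t (s + q) a d) = (\<Sum>k<p. ?t (p + q - 1 - k) a d * ?t k c b)"
    using sum_reflect[where F = "\<lambda>u v. ?t u a d * ?t v c b" and p = p and q = q] by (simp add: mult.commute)
  have r2: "(\<Sum>s<p. ?t s a d * ?t (q + (p - 1 - s)) c b) = (\<Sum>k<p. ?t k a d * ?t (p + q - 1 - k) c b)"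
    by (intro sum.cong refl) (simp add: add.commute)
  have r3: "(\<Sum>s<q. ?t s c b * ?t (p + (q - 1 - s)) a d) = (\<Sum>k<q. ?t (p + q - 1 - k) a d * ?t k c b)"
    by (intro sum.cong refl) (simp add: mult.commute)
  have r4: "(\<Sum>s<q. ?t (s + p) c b * ?t (q - 1 - s) a d) = (\<Sum>k<q. ?t k a d * ?t (p + q - 1 - k) c b)"
    using sum_reflect[where F = "\<lambda>u v. ?t v a d * ?t u c b" and p = q and q = p] by
        (simp add: add.commute mult.commute)
  have "pbr N K (t_unnorm N K p a b) (t_unnorm N K q c d) x
    = (\<Sum>l<N. \<Sum>m<N. pb x c l * mpow N (Bt K x) q l m * pbr N K (t_unnorm N K p a b) (\<lambda>x. ps x m d) x)
    + (\<Sum>l<N. \<Sum>m<N. ps x m d * (pb x c l * pbr N K (t_unnorm N K p a b) (Btpow N K q l m) x))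
    + (\<Sum>l<N. \<Sum>m<N. ps x m d * (mpow N (Bt K x) q l m * pbr N K (t_unnorm N K p a b) (\<lambda>x. pb x c l) x))"
    using assms by (simp only: pbr_t_unnorm_right distrib_left sum.distrib add.assoc)
  also have "\<dots> = - (if a = d then ?t (q + p) c b else 0) - (\<Sum>s<p. ?t s a d * ?t (q + (p - 1 - s)) c b)
    + ((\<Sum>s<q. ?t s c b * ?t (p + (q - 1 - s)) a d) - (\<Sum>s<q. ?t (s + p) c b * ?t (q - 1 - s) a d))
    + ((if b = c then ?t (p + q) a d else 0) + (\<Sum>s<p. ?t (p - 1 - s) c b * ?t (s + q) a d))"
    using assms by (simp only: sum_pbr_t_unnorm_ps sum_pbr_t_unnorm_Btpow sum_pbr_t_unnorm_pb)
  finally show ?thesis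
    unfolding r1 r2 r3 r4 by (simp add: sum_subtractf add.commute eq_commute[of b c])
qed

lemma pbr_t_unnorm:
  assumes "a < K" "b < K" "c < K" "d < K"
  shows "pbr N K (t_unnorm N K p a b) (t_unnorm N K q c d) x =
    (if b = c then t_unnorm N K (p + q) a d x else 0) - (if a = d then t_unnorm N K (p + q) c b x else 0)
    + 2 * (\<Sum>k<min p q. t_unnorm N K (p + q - 1 - k) a d x * t_unnorm N K k c b x
                         - t_unnorm N K k a d x * t_unnorm N K (p + q - 1 - k) c b x)"
proof -
  let ?A = "\<lambda>k. t_unnorm N K (p + q - 1 - k) a d x * t_unnorm N K k c b x
              - t_unnorm N K k a d x * t_unnorm N K (p + q - 1 - k) c b x"
  have "(\<Sum>k<p. ?A k) + (\<Sum>k<q. ?A k) = 2 * (\<Sum>k<min p q. ?A k)"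
    by (rule sum_lessThan_antisym) (simp add: Suc_diff_Suc)
  then show ?thesis
    unfolding pbr_t_unnorm_sums[OF assms] by (simp only: add.assoc)
qed

lemma tfun'_of_nat: "tfun' N K (int k) a b x = (1 / 2 ^ k) * t_unnorm N K k a b x"
  by (simp add: tfun'_def tfun_eq_t_unnorm)

lemma tfun'_minus_one: "tfun' N K (-1) a b x = (if a = b then 1 else 0)"
  by (simp add: tfun'_def)

lemma tfun'_complementary_product:
  assumes "k < p + q"
  shows "tfun' N K (int (p + q) - 1 - int k) a d x * tfun' N K (int k) c b x
    = 2 * (1 / 2 ^ p) * (1 / 2 ^ q) * (t_unnorm N K (p + q - 1 - k) a d x * t_unnorm N K k c b x)"
proof -
  let ?m = "p + q - 1 - k"
  have "int (p + q) - 1 - int k = int ?m" using assms by auto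
  then have "tfun' N K (int (p + q) - 1 - int k) a d x * tfun' N K (int k) c b x
    = 1 / (2 ^ ?m * 2 ^ k) * (t_unnorm N K ?m a d x * t_unnorm N K k c b x)"
    by (simp only: tfun'_of_nat) simp
  moreover have "p + q = Suc (?m + k)" using assms by arith
  then have "(2 :: complex) ^ p * 2 ^ q = 2 * (2 ^ ?m * 2 ^ k)"
    by (metis power_add power_Suc)
  then have "1 / (2 ^ ?m * 2 ^ k) = 2 * (1 / 2 ^ p) * (1 / 2 ^ q :: complex)"
    by (simp add: divide_simps)
  ultimately show ?thesis by (simp only:)
qed

lemma pbr_tfun_scaled:
  assumes "a < K" "b < K" "c < K" "d < K"
  shows "pbr N K (tfun N K p a b) (tfun N K q c d) x
    = (1 / 2 ^ p) * (1 / 2 ^ q) * pbr N K (t_unnorm N K p a b) (t_unnorm N K q c d) x"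
proof -
  have "pbr N K (tfun N K p a b) (tfun N K q c d) x
      = (1 / 2 ^ p) * pbr N K (t_unnorm N K p a b) (\<lambda>x. (1 / 2 ^ q) * t_unnorm N K q c d x) x"
    unfolding tfun_eq_t_unnorm by (rule pbr_cmult_left) (rule poly_fun_t_unnorm[OF assms(1,2)])
  also have "\<dots> = (1 / 2 ^ p) * (1 / 2 ^ q) * pbr N K (t_unnorm N K p a b) (t_unnorm N K q c d) x"
    by (simp only: pbr_cmult_right[OF poly_fun_t_unnorm[OF assms(3,4)]] mult.assoc)
  finally show ?thesis .
qed

lemma pbr_tfun:
  assumes "a < K" "b < K" "c < K" "d < K"
  shows "pbr N K (tfun N K p a b) (tfun N K q c d) = (\<lambda>x. \<Sum>i\<in>{-1 .. int (min p q) - 1}.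
     tfun' N K (int (p + q) - 1 - i) a d x * tfun' N K i c b x - tfun' N K i a d x * tfun' N K
         (int (p + q) - 1 - i) c b x)"
proof
  fix x
  let ?t = "\<lambda>n a d. t_unnorm N K n a d x"
  have outer: "tfun' N K (int (p + q) - 1 - (-1)) a d x * tfun' N K (-1) c b x
      - tfun' N K (-1) a d x * tfun' N K (int (p + q) - 1 - (-1)) c b x
    = (1 / 2 ^ p) * (1 / 2 ^ q) *
        ((if b = c then ?t (p + q) a d else 0) - (if a = d then ?t (p + q) c b else 0))"
    using tfun'_of_nat[of N K "p + q"] by (simp add: tfun'_minus_one power_add diff_divide_distrib)
  have per_term: "tfun' N K (int (p + q) - 1 - int k) a d x * tfun' N K (int k) c b x
      - tfun' N K (int k) a d x * tfun' N K (int (p + q) - 1 - int k) c b x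
    = (1 / 2 ^ p) * (1 / 2 ^ q) *
        (2 * (?t (p + q - 1 - k) a d * ?t k c b - ?t k a d * ?t (p + q - 1 - k) c b))"
    if "k \<in> {..<min p q}" for k
  proof -
    have "k < p + q" using that by auto
    then show ?thesis
      by (simp only: tfun'_complementary_product mult.commute[of "tfun' N K (int k) a d x"])
         (simp add: algebra_simps)
  qed
  have inner: "(\<Sum>k<min p q. tfun' N K (int (p + q) - 1 - int k) a d x * tfun' N K (int k) c b x
      - tfun' N K (int k) a d x * tfun' N K (int (p + q) - 1 - int k) c b x)
    = (1 / 2 ^ p) * (1 / 2 ^ q) *
        (2 * (\<Sum>k<min p q. ?t (p + q - 1 - k) a d * ?t k c b - ?t k a d * ?t (p + q - 1 - k) c b))"
    by (simp only: sum.cong[OF refl per_term] sum_distrib_left)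
  show "pbr N K (tfun N K p a b) (tfun N K q c d) x = (\<Sum>i\<in>{-1 .. int (min p q) - 1}.
     tfun' N K (int (p + q) - 1 - i) a d x * tfun' N K i c b x - tfun' N K i a d x * tfun' N K
         (int (p + q) - 1 - i) c b x)"
    unfolding pbr_tfun_scaled[OF assms] sum_from_minus_one outer inner pbr_t_unnorm[OF assms]
    by (simp only: distrib_left)
qed

section \<open>Invariance and the traces of powers\<close>

lemma gl_act_elementary:
  assumes "k < N" "l < N"
  shows "m < N \<Longrightarrow> n < N \<Longrightarrow> Bm (gl_act N (elementary k l t) (elementary k l s) x) m n
      = Bm x m n + (if m = k then t * Bm x l n else 0) +
          (if n = l then s * (Bm x m k + (if m = k then t * Bm x l k else 0)) else 0)"
    and "i < N \<Longrightarrow> ps (gl_act N (elementary k l t) (elementary k l s) x) i a = ps x i a +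
        (if i = k then t * ps x l a else 0)"
    and "i < N \<Longrightarrow> pb (gl_act N (elementary k l t) (elementary k l s) x) a i = pb x a i +
        (if i = l then s * pb x a k else 0)"
  using assms by (simp_all add: gl_act_def mmul_elementary_left mmul_elementary_right)

text \<open>The one-parameter subgroup \<open>t \<mapsto> 1 + t E\<^sub>k\<^sub>l\<close> of \<open>GL\<^sub>N\<close> acting on \<open>x\<close>; its inverse is
  \<open>1 - t / (1 + t \<delta>\<^sub>k\<^sub>l) E\<^sub>k\<^sub>l\<close>.\<close>

definition gl_curve :: "nat \<Rightarrow> nat \<Rightarrow> nat \<Rightarrow> rep \<Rightarrow> complex \<Rightarrow> rep" where
  "gl_curve N k l x t = gl_act N (elementary k l t) (elementary k l (- t / (1 + t * of_bool (k = l)))) x"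

definition gl_generator :: "nat \<Rightarrow> nat \<Rightarrow> rep \<Rightarrow> coord \<Rightarrow> complex" where
  "gl_generator k l x u = (case u of
      CB m n \<Rightarrow> (if m = k then Bm x l n else 0) - (if n = l then Bm x m k else 0)
    | CPsi i a \<Rightarrow> (if i = k then ps x l a else 0)
    | CPsib a i \<Rightarrow> - (if i = l then pb x a k else 0))"

lemma gl_curve_zero: "k < N \<Longrightarrow> l < N \<Longrightarrow> u \<in> coords N K \<Longrightarrow> coord_val (gl_curve N k l x 0) u = coord_val x u"
  by (cases u) (simp_all add: gl_curve_def gl_act_elementary)

lemma gl_curve_has_derivative:
  assumes "k < N" "l < N" "u \<in> coords N K"
  shows "((\<lambda>t. coord_val (gl_curve N k l x t) u) has_field_derivative gl_generator k l x u) (at 0)"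
proof -
  define c where "c t = - t / (1 + t * of_bool (k = l))" for t :: complex
  have c: "(c has_field_derivative -1) (at 0)" "c 0 = 0"
    unfolding c_def by (auto intro!: derivative_eq_intros)
  show ?thesis
  proof (cases u)
    case (CB m n)
    with assms c show ?thesis
      by (simp add: gl_curve_def gl_act_elementary gl_generator_def flip: c_def)
         (auto intro!: derivative_eq_intros)
  next
    case (CPsi i a)
    with assms show ?thesis
      by (simp add: gl_curve_def gl_act_elementary gl_generator_def) (auto intro!: derivative_eq_intros)
  next
    case (CPsib a i)
    with assms c show ?thesis
      by (simp add: gl_curve_def gl_act_elementary gl_generator_def flip: c_def)
         (auto intro!: derivative_eq_intros)
  qed
qed

lemma inv_alg_gl_curve:
  assumes "f \<in> inv_alg N K" "k < N" "l < N" "norm t < 1"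
  shows "f (gl_curve N k l x t) = f x"
proof -
  define s where "s = - t / (1 + t * of_bool (k = l))"
  have "1 + t * of_bool (k = l) \<noteq> 0"
    using assms(4) by (auto simp: add_eq_0_iff)
  have "s + t + s * t * of_bool (k = l) = s * (1 + t * of_bool (k = l)) + t"
    by algebra
  also have "\<dots> = 0"
    using \<open>1 + t * of_bool (k = l) \<noteq> 0\<close> by (simp add: s_def)
  finally have "is_inv_pair N (elementary k l t) (elementary k l s)"
    by (rule is_inv_pair_elementary[OF assms(2,3)])
  with assms(1) show ?thesis by (simp add: inv_alg_def gl_curve_def s_def)
qed

lemma inv_alg_poly_fun: "f \<in> inv_alg N K \<Longrightarrow> f \<in> poly_fun N K"
  by (simp add: inv_alg_def)

text \<open>Differentiate \<open>t \<mapsto> f (gl_curve N k l x t)\<close>, which is constant near \<open>0\<close>.\<close>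

lemma inv_alg_generator:
  assumes f: "f \<in> inv_alg N K" and kl: "k < N" "l < N"
  shows "(\<Sum>u\<in>coords N K. pdiff f x u * gl_generator k l x u) = 0"
proof -
  have fp: "f \<in> poly_fun N K" using f by (rule inv_alg_poly_fun)
  have "((\<lambda>t. f (gl_curve N k l x t)) has_field_derivative
      (\<Sum>u\<in>coords N K. pdiff f (gl_curve N k l x 0) u * gl_generator k l x u)) (at 0)"
    by (rule poly_fun_chain_rule[OF fp gl_curve_has_derivative[OF kl]])
  moreover have "((\<lambda>t. f (gl_curve N k l x t)) has_field_derivative 0) (at 0)"
    by (rule has_field_derivative_transform_within_open[of "\<lambda>t. f x" 0 0 "ball 0 1"])
       (auto simp: inv_alg_gl_curve[OF f kl])
  ultimately have "(\<Sum>u\<in>coords N K. pdiff f (gl_curve N k l x 0) u * gl_generator k l x u) = 0"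
    by (rule DERIV_unique)
  moreover have "pdiff f (gl_curve N k l x 0) u = pdiff f x u" if "u \<in> coords N K" for u
    using pdiff_eq_on_coords[OF fp gl_curve_zero[OF kl] that] .
  ultimately show ?thesis by (simp cong: sum.cong)
qed

lemma inv_alg_infinitesimal:
  assumes f: "f \<in> inv_alg N K" and kl: "k < N" "l < N"
  shows "(\<Sum>n<N. pdiff f x (CB k n) * Bm x l n) - (\<Sum>m<N. pdiff f x (CB m l) * Bm x m k)
       + (\<Sum>a<K. pdiff f x (CPsi k a) * ps x l a) - (\<Sum>a<K. pdiff f x (CPsib a l) * pb x a k) = 0"
  using inv_alg_generator[OF assms, of x]
  by (simp add: sum_coords gl_generator_def right_diff_distrib sum_subtractf sum.distrib
      if_distrib[of "\<lambda>z. _ * z"] kl cong: if_cong)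
     (simp add: algebra_simps sum_negf kl)

text \<open>Transposed so that an invariant \<open>f\<close> acts on \<open>Bt\<close> as the commutator with this matrix.\<close>

definition grad_B :: "(rep \<Rightarrow> complex) \<Rightarrow> rep \<Rightarrow> cmat" where
  "grad_B f x = (\<lambda>r s. pdiff f x (CB s r))"

lemma pbr_inv_Bt:
  assumes f: "f \<in> inv_alg N K" and mn: "m < N" "n < N"
  shows "pbr N K f (\<lambda>x. Bt K x m n) x = mmul N (grad_B f x) (Bt K x) m n - mmul N (Bt K x) (grad_B f x) m n"
proof -
  let ?P = "\<lambda>r n. \<Sum>a<K. pb x a n * ps x r a"
  have "pbr N K f (\<lambda>x. Bt K x m n) x = pbr N K f (\<lambda>x. Bm x m n) x +
      (\<Sum>b<K. pbr N K f (\<lambda>x. ps x m b * pb x b n) x)"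
    unfolding Bt_eq
    by (subst pbr_add_right, (use mn in \<open>auto intro!: poly_fun.intros poly_fun_sum\<close>)[2],
        subst pbr_sum_right, (use mn in \<open>auto intro!: poly_fun.intros\<close>)[2]) (rule refl)
  also have "(\<Sum>b<K. pbr N K f (\<lambda>x. ps x m b * pb x b n) x)
      = (\<Sum>b<K. ps x m b * pdiff f x (CPsi n b) - pb x b n * pdiff f x (CPsib b m))"
    by (intro sum.cong refl, subst pbr_mult_right)
       (use mn in \<open>auto intro!: poly_fun.intros simp: pbr_ps_right pbr_pb_right\<close>)
  also have "pbr N K f (\<lambda>x. Bm x m n) x = (\<Sum>r<N. pdiff f x (CB r m) * ?P r n) -
      (\<Sum>s<N. pdiff f x (CB n s) * ?P m s)"
  proof -
    have "pbr N K f (\<lambda>x. Bm x m n) x = (\<Sum>r<N. \<Sum>s<N. (if s = m then pdiff f x (CB r s) * ?P r n else 0))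
        - (\<Sum>r<N. \<Sum>s<N. (if r = n then pdiff f x (CB r s) * ?P m s else 0))"
      using mn by (simp add: pbr_Bm_right Bbr_def right_diff_distrib sum_subtractf
          if_distrib[of "\<lambda>z. _ * z"] cong: if_cong)
    then show ?thesis using mn by simp
  qed
  finally have expansion: "pbr N K f (\<lambda>x. Bt K x m n) x
      = (\<Sum>r<N. pdiff f x (CB r m) * ?P r n) - (\<Sum>s<N. pdiff f x (CB n s) * ?P m s)
      + (\<Sum>b<K. ps x m b * pdiff f x (CPsi n b) - pb x b n * pdiff f x (CPsib b m))" .
  have invariance: "(\<Sum>s<N. pdiff f x (CB n s) * Bm x m s) - (\<Sum>r<N. pdiff f x (CB r m) * Bm x r n)
       + (\<Sum>a<K. pdiff f x (CPsi n a) * ps x m a) - (\<Sum>a<K. pdiff f x (CPsib a m) * pb x a n) = 0"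
    by (rule inv_alg_infinitesimal[OF f mn(2) mn(1)])
  have "Bt K x r q = Bm x r q + ?P r q" for r q
    by (simp add: Bt_def mult.commute)
  then have "(\<Sum>r<N. pdiff f x (CB r m) * Bt K x r n) - (\<Sum>s<N. pdiff f x (CB n s) * Bt K x m s)
      = pbr N K f (\<lambda>x. Bt K x m n) x"
    unfolding expansion using invariance by (simp add: distrib_left sum.distrib sum_subtractf algebra_simps)
  then show ?thesis
    by (simp add: mmul_def grad_B_def mult.commute)
qed

lemma pbr_inv_Btpow:
  assumes f: "f \<in> inv_alg N K" and ij: "i < N" "j < N"
  shows "pbr N K f (Btpow N K k i j) x
    = mmul N (grad_B f x) (mpow N (Bt K x) k) i j - mmul N (mpow N (Bt K x) k) (grad_B f x) i j"
  using ij(2)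
proof (induction k arbitrary: j)
  case 0 then show ?case using ij(1) by (simp add: Btpow_0 mmul_one_left mmul_one_right)
next
  case (Suc k)
  let ?G = "grad_B f x" and ?M = "mpow N (Bt K x) k" and ?B = "Bt K x"
  have "pbr N K f (Btpow N K (Suc k) i j) x = (\<Sum>r<N. pbr N K f (\<lambda>x. Btpow N K k i r x * Bt K x r j) x)"
    unfolding Btpow_Suc
    by (rule pbr_sum_right) (use Suc.prems in \<open>auto intro!: poly_fun.intros poly_fun_Btpow poly_fun_Bt\<close>)
  also have "\<dots> = (\<Sum>r<N. ?M i r * (mmul N ?G ?B r j - mmul N ?B ?G r j) + ?B r j *
      (mmul N ?G ?M i r - mmul N ?M ?G i r))"
    by (intro sum.cong refl, subst pbr_mult_right)
       (use Suc in \<open>auto intro!: poly_fun_Btpow poly_fun_Bt simp: pbr_inv_Bt[OF f] Btpow_def\<close>)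
  also have "\<dots> = (\<Sum>r<N. ?M i r * (mmul N ?G ?B r j - mmul N ?B ?G r j))
      + (\<Sum>r<N. (mmul N ?G ?M i r - mmul N ?M ?G i r) * ?B r j)"
    by (simp only: sum.distrib) (simp add: mult_ac)
  also have "\<dots> = mmul N ?M (\<lambda>r j. mmul N ?G ?B r j - mmul N ?B ?G r j) i j
      + mmul N (\<lambda>i r. mmul N ?G ?M i r - mmul N ?M ?G i r) ?B i j"
    by (simp only: mmul_def)
  also have "\<dots> = mmul N ?G (mmul N ?M ?B) i j - mmul N (mmul N ?M ?B) ?G i j"
    by (simp add: mmul_diff_left mmul_diff_right mmul_assoc)
  finally show ?case by simp
qed

lemma pbr_trBt_inv:
  assumes "f \<in> inv_alg N K"
  shows "pbr N K (trBt N K n) f = (\<lambda>x. 0)"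
proof
  fix x
  have "trBt N K n = (\<lambda>x. \<Sum>i<N. Btpow N K n i i x)"
    by (simp add: trBt_def Btpow_def)
  then have "pbr N K f (trBt N K n) x = (\<Sum>i<N. pbr N K f (Btpow N K n i i) x)"
    by (simp only:) (rule pbr_sum_right, auto intro!: poly_fun_Btpow)
  also have "\<dots> = 0"
    using trace_mmul_commute[of N "grad_B f x" "mpow N (Bt K x) n"]
    by (simp add: pbr_inv_Btpow[OF assms] sum_subtractf)
  finally show "pbr N K (trBt N K n) f x = 0"
    by (subst pbr_skew) simp
qed

section \<open>The Jacobi identity\<close>

definition jacobiator :: "nat \<Rightarrow> nat \<Rightarrow> (rep \<Rightarrow> complex) \<Rightarrow> (rep \<Rightarrow> complex) \<Rightarrow>
    (rep \<Rightarrow> complex) \<Rightarrow> rep \<Rightarrow> complex" where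
  "jacobiator N K f g h x = pbr N K f (pbr N K g h) x + pbr N K g (pbr N K h f) x + pbr N K h
      (pbr N K f g) x"

lemma jacobiator_cycle: "jacobiator N K f g h x = jacobiator N K g h f x"
  by (simp add: jacobiator_def algebra_simps)

lemma jacobiator_const_left: "jacobiator N K (\<lambda>x. c) g h x = 0"
  by (simp add: jacobiator_def pbr_const_fun)

lemma jacobiator_add_left:
  assumes "f1 \<in> poly_fun N K" "f2 \<in> poly_fun N K" "g \<in> poly_fun N K" "h \<in> poly_fun N K"
  shows "jacobiator N K (\<lambda>x. f1 x + f2 x) g h x = jacobiator N K f1 g h x + jacobiator N K f2 g h x"
  using assms
  by (simp add: jacobiator_def pbr_add_right_fun pbr_add_left_fun pbr_add_left pbr_add_right poly_fun_pbr)

lemma jacobiator_mult_left: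
  assumes "f1 \<in> poly_fun N K" "f2 \<in> poly_fun N K" "g \<in> poly_fun N K" "h \<in> poly_fun N K"
  shows "jacobiator N K (\<lambda>x. f1 x * f2 x) g h x = f1 x * jacobiator N K f2 g h x + f2 x
      * jacobiator N K f1 g h x"
proof -
  have "jacobiator N K (\<lambda>x. f1 x * f2 x) g h x =
      (f1 x * pbr N K f2 (pbr N K g h) x + f2 x * pbr N K f1 (pbr N K g h) x)
    + (f1 x * pbr N K g (pbr N K h f2) x + pbr N K h f2 x * pbr N K g f1 x
       + (f2 x * pbr N K g (pbr N K h f1) x + pbr N K h f1 x * pbr N K g f2 x))
    + (f1 x * pbr N K h (pbr N K f2 g) x + pbr N K f2 g x * pbr N K h f1 x
       + (f2 x * pbr N K h (pbr N K f1 g) x + pbr N K f1 g x * pbr N K h f2 x))"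
    using assms unfolding jacobiator_def
    by (simp add: pbr_mult_left pbr_mult_right_fun pbr_mult_left_fun pbr_add_right pbr_mult_right
        poly_fun_pbr poly_fun.pf_mult)
  also have "\<dots> = f1 x * jacobiator N K f2 g h x + f2 x * jacobiator N K f1 g h x"
    unfolding jacobiator_def using pbr_skew[of N K f2 g x] pbr_skew[of N K f1 g x]
    by (simp add: algebra_simps)
  finally show ?thesis .
qed

lemma jacobiator_expansion_left:
  "f \<in> poly_fun N K \<Longrightarrow> g \<in> poly_fun N K \<Longrightarrow> h \<in> poly_fun N K \<Longrightarrow>
   jacobiator N K f g h x = (\<Sum>u\<in>coords N K. pdiff f x u * jacobiator N K (\<lambda>y. coord_val y u) g h x)"
  by (rule derivation_expansion[where D = "\<lambda>f. jacobiator N K f g h"])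
     (auto simp: jacobiator_const_left jacobiator_add_left jacobiator_mult_left)

lemma jacobiator_trilinear:
  assumes f: "f \<in> poly_fun N K" and g: "g \<in> poly_fun N K" and h: "h \<in> poly_fun N K"
  shows "jacobiator N K f g h x = (\<Sum>u\<in>coords N K. \<Sum>w\<in>coords N K. \<Sum>z\<in>coords N K.
    pdiff f x u * pdiff g x w * pdiff h x z
    * jacobiator N K (\<lambda>y. coord_val y u) (\<lambda>y. coord_val y w) (\<lambda>y. coord_val y z) x)"
proof -
  let ?x = "\<lambda>u y. coord_val y u"
  have "jacobiator N K (?x u) g h x
      = (\<Sum>w\<in>coords N K. \<Sum>z\<in>coords N K. pdiff g x w * pdiff h x z * jacobiator N K (?x u) (?x w) (?x z) x)"
    if "u \<in> coords N K" for u
  proof -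
    have "jacobiator N K (?x u) g h x = (\<Sum>w\<in>coords N K. pdiff g x w * jacobiator N K (?x w) h (?x u) x)"
      by (subst jacobiator_cycle, rule jacobiator_expansion_left[OF g h poly_fun_coord[OF that]])
    also have "\<dots> = (\<Sum>w\<in>coords N K. pdiff g x w
        * (\<Sum>z\<in>coords N K. pdiff h x z * jacobiator N K (?x z) (?x u) (?x w) x))"
      by (intro sum.cong refl, subst jacobiator_cycle,
          subst jacobiator_expansion_left[OF h poly_fun_coord[OF that] poly_fun_coord]) simp_all
    finally show ?thesis
      by (simp add: sum_distrib_left mult.assoc jacobiator_cycle[of N K "?x z" "?x u" "?x w" x for z w])
  qed
  then show ?thesis
    by (simp add: jacobiator_expansion_left[OF f g h] sum_distrib_left mult.assoc cong: sum.cong)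
qed

text \<open>\<open>lie_bivec N K f g h\<close> is the derivative of the bivector along the Hamiltonian vector
  field of \<open>f\<close>, evaluated on \<open>dg\<close> and \<open>dh\<close>; the Jacobiator is its cyclic sum.\<close>

definition lie_bivec :: "nat \<Rightarrow> nat \<Rightarrow> (rep \<Rightarrow> complex) \<Rightarrow> (rep \<Rightarrow> complex) \<Rightarrow>
    (rep \<Rightarrow> complex) \<Rightarrow> rep \<Rightarrow> complex" where
  "lie_bivec N K f g h x = (\<Sum>w\<in>coords N K. \<Sum>z\<in>coords N K.
     pdiff g x w * pdiff h x z * pbr N K f (pbr N K (\<lambda>y. coord_val y w) (\<lambda>y. coord_val y z)) x)"

lemma jacobiator_eq_lie_bivec:
  assumes f: "f \<in> poly_fun N K" and g: "g \<in> poly_fun N K" and h: "h \<in> poly_fun N K"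
  shows "jacobiator N K f g h x = lie_bivec N K f g h x + lie_bivec N K g h f x + lie_bivec N K h f g x"
proof -
  let ?C = "coords N K" and ?x = "\<lambda>u y. coord_val y u"
  define T where "T u w z = pbr N K (?x u) (pbr N K (?x w) (?x z)) x" for u w z
  have expand: "lie_bivec N K f' g' h' x
      = (\<Sum>w\<in>?C. \<Sum>z\<in>?C. \<Sum>u\<in>?C. pdiff g' x w * pdiff h' x z * pdiff f' x u * T u w z)"
    if "f' \<in> poly_fun N K" for f' g' h'
    unfolding lie_bivec_def T_def by (simp add: pbr_expansion_left[OF that] sum_distrib_left mult.assoc)
  have "lie_bivec N K f g h x = (\<Sum>u\<in>?C. \<Sum>w\<in>?C. \<Sum>z\<in>?C. pdiff f x u * pdiff g x w * pdiff h x z * T u w z)"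
    unfolding expand[OF f] by (subst sum_rotate3[symmetric]) (simp add: algebra_simps)
  moreover have "lie_bivec N K g h f x =
      (\<Sum>u\<in>?C. \<Sum>w\<in>?C. \<Sum>z\<in>?C. pdiff f x u * pdiff g x w * pdiff h x z * T w z u)"
    unfolding expand[OF g] by (subst sum_rotate3) (simp add: algebra_simps)
  moreover have "lie_bivec N K h f g x =
      (\<Sum>u\<in>?C. \<Sum>w\<in>?C. \<Sum>z\<in>?C. pdiff f x u * pdiff g x w * pdiff h x z * T z u w)"
    unfolding expand[OF h] by (simp add: algebra_simps)
  ultimately show ?thesis
    unfolding jacobiator_trilinear[OF f g h]
    by (simp add: jacobiator_def T_def sum.distrib distrib_left algebra_simps)
qed

definition psi_moment :: "nat \<Rightarrow> nat \<Rightarrow> (rep \<Rightarrow> complex) \<Rightarrow> rep \<Rightarrow> nat \<Rightarrow> nat \<Rightarrow> complex" where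
  "psi_moment N K f x m q = (\<Sum>a<K. ps x m a * pdiff f x (CPsi q a)) -
      (\<Sum>a<K. pb x a q * pdiff f x (CPsib a m))"

lemma pbr_Bbr:
  assumes f: "f \<in> poly_fun N K" and idx: "m < N" "n < N" "p < N" "q < N"
  shows "pbr N K f (\<lambda>y. Bbr K y m n p q) x
    = (if n = p then psi_moment N K f x m q else 0) - (if m = q then psi_moment N K f x p n else 0)"
proof -
  have pairing: "pbr N K f (\<lambda>y. \<Sum>a<K. pb y a q' * ps y m' a) x = psi_moment N K f x m' q'"
    and poly: "(\<lambda>y. \<Sum>a<K. pb y a q' * ps y m' a) \<in> poly_fun N K"
    if "m' < N" "q' < N" for m' q'
  proof -
    have "pbr N K f (\<lambda>y. \<Sum>a<K. pb y a q' * ps y m' a) x = (\<Sum>a<K. pbr N K f (\<lambda>y. pb y a q' * ps y m' a) x)"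
      by (rule pbr_sum_right) (use that in \<open>auto intro!: poly_fun.intros\<close>)
    also have "\<dots> = (\<Sum>a<K. pb x a q' * (- pdiff f x (CPsib a m')) + ps x m' a * pdiff f x (CPsi q' a))"
      by (intro sum.cong refl, subst pbr_mult_right)
         (use that in \<open>auto intro!: poly_fun.intros simp: pbr_ps_right pbr_pb_right\<close>)
    finally show "pbr N K f (\<lambda>y. \<Sum>a<K. pb y a q' * ps y m' a) x = psi_moment N K f x m' q'"
      by (simp add: psi_moment_def sum_subtractf sum_negf)
    show "(\<lambda>y. \<Sum>a<K. pb y a q' * ps y m' a) \<in> poly_fun N K"
      using that by (intro poly_fun_sum) (auto intro!: poly_fun.intros)
  qed
  show ?thesis
    unfolding Bbr_def
    by (cases "n = p"; cases "m = q")
        (simp_all add: pbr_diff_right pbr_uminus_right poly idx pairing poly_fun.pf_const)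
qed

lemma pbr_pbr_coord_pair:
  assumes "f \<in> poly_fun N K" "w \<in> coords N K" "z \<in> coords N K"
  shows "pbr N K f (pbr N K (\<lambda>y. coord_val y w) (\<lambda>y. coord_val y z)) x = (case w of
      CB m n \<Rightarrow> (case z of
        CB p q \<Rightarrow> (if n = p then psi_moment N K f x m q else 0) -
            (if m = q then psi_moment N K f x p n else 0)
      | _ \<Rightarrow> 0)
    | _ \<Rightarrow> 0)"
  using assms by (cases w; cases z)
      (simp_all add: pbr_coord_pair pbr_Bbr pbr_const_fun del: coord_val.simps)

lemma psi_moment_inv:
  assumes "f \<in> inv_alg N K" "m < N" "q < N"
  shows "psi_moment N K f x m q = (\<Sum>r<N. pdiff f x (CB r m) * Bm x r q) -
      (\<Sum>n<N. pdiff f x (CB q n) * Bm x m n)"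
  using inv_alg_infinitesimal[OF assms(1,3,2), of x] by (simp add: psi_moment_def algebra_simps)

lemma lie_bivec_eq:
  assumes "f \<in> poly_fun N K"
  shows "lie_bivec N K f g h x
    = (\<Sum>m<N. \<Sum>n<N. \<Sum>q<N. pdiff g x (CB m n) * pdiff h x (CB n q) * psi_moment N K f x m q)
    - (\<Sum>m<N. \<Sum>n<N. \<Sum>p<N. pdiff g x (CB m n) * pdiff h x (CB p m) * psi_moment N K f x p n)"
proof -
  let ?G = "\<lambda>m n. pdiff g x (CB m n)" and ?H = "\<lambda>m n. pdiff h x (CB m n)" and ?Q = "psi_moment N K f x"
  have "lie_bivec N K f g h x = (\<Sum>m<N. \<Sum>n<N. \<Sum>p<N. \<Sum>q<N.
      ?G m n * ?H p q * ((if n = p then ?Q m q else 0) - (if m = q then ?Q p n else 0)))"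
    unfolding lie_bivec_def
    by (simp add: pbr_pbr_coord_pair[OF assms] sum_coords cong: sum.cong)
  also have "\<dots> = (\<Sum>m<N. \<Sum>n<N. \<Sum>p<N. \<Sum>q<N. if p = n then ?G m n * ?H p q * ?Q m q else 0)
     - (\<Sum>m<N. \<Sum>n<N. \<Sum>p<N. \<Sum>q<N. if q = m then ?G m n * ?H p q * ?Q p n else 0)"
    by (simp add: right_diff_distrib sum_subtractf if_distrib[of "\<lambda>z. _ * z"] eq_commute cong: if_cong)
  also have "\<dots> = (\<Sum>m<N. \<Sum>n<N. \<Sum>q<N. ?G m n * ?H n q * ?Q m q) -
      (\<Sum>m<N. \<Sum>n<N. \<Sum>p<N. ?G m n * ?H p m * ?Q p n)"
  proof -
    have "(\<Sum>p<N. \<Sum>q<N. if p = n then ?G m n * ?H p q * ?Q m q else 0) = (\<Sum>q<N. ?G m n * ?H n q * ?Q m q)"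
      "(\<Sum>p<N. \<Sum>q<N. if q = m then ?G m n * ?H p q * ?Q p n else 0) = (\<Sum>p<N. ?G m n * ?H p m * ?Q p n)"
      if "m < N" "n < N" for m n
      using that by simp_all
    then show ?thesis by simp
  qed
  finally show ?thesis .
qed

lemma lie_bivec_inv: assumes f: "f \<in> inv_alg N K"
  shows "lie_bivec N K f g h x = trace4 N (\<lambda>a b. Bm x b a) (\<lambda>a b. pdiff f x (CB a b))
      (\<lambda>a b. pdiff g x (CB a b)) (\<lambda>a b. pdiff h x (CB a b))
     - trace4 N (\<lambda>a b. Bm x b a) (\<lambda>a b. pdiff g x (CB a b)) (\<lambda>a b. pdiff h x (CB a b))
         (\<lambda>a b. pdiff f x (CB a b))
     - trace4 N (\<lambda>a b. Bm x b a) (\<lambda>a b. pdiff f x (CB a b)) (\<lambda>a b. pdiff h x (CB a b))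
         (\<lambda>a b. pdiff g x (CB a b))
     + trace4 N (\<lambda>a b. Bm x b a) (\<lambda>a b. pdiff h x (CB a b)) (\<lambda>a b. pdiff g x (CB a b))
         (\<lambda>a b. pdiff f x (CB a b))"
proof -
  let ?T = "\<lambda>a b. Bm x b a" and ?F = "\<lambda>a b. pdiff f x (CB a b)" and ?G = "\<lambda>a b. pdiff g x
      (CB a b)" and ?H = "\<lambda>a b. pdiff h x (CB a b)"
  have fp: "f \<in> poly_fun N K" using f by (rule inv_alg_poly_fun)
  have Q: "psi_moment N K f x m q = (\<Sum>r<N. ?F r m * ?T q r) -
      (\<Sum>r<N. ?F q r * ?T r m)" if "m < N" "q < N" for m q
    using psi_moment_inv[OF f that] by simp
  have t1: "(\<Sum>m<N. \<Sum>n<N. \<Sum>q<N. ?G m n * ?H n q * psi_moment N K f x m q) = trace4 N ?G ?H ?T ?F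
      - trace4 N ?G ?H ?F ?T"
    by (simp add: Q trace4_def right_diff_distrib sum_subtractf sum_distrib_left algebra_simps)
  have t2: "(\<Sum>m<N. \<Sum>n<N. \<Sum>p<N. ?G m n * ?H p m * psi_moment N K f x p n) = trace4 N ?H ?G ?T ?F
      - trace4 N ?H ?G ?F ?T"
  proof -
    have "(\<Sum>m<N. \<Sum>n<N. \<Sum>p<N. ?G m n * ?H p m * psi_moment N K f x p n) =
        (\<Sum>p<N. \<Sum>m<N. \<Sum>n<N. ?G m n * ?H p m * psi_moment N K f x p n)"
      by (rule sum_rotate3[symmetric])
    also have "\<dots> = trace4 N ?H ?G ?T ?F - trace4 N ?H ?G ?F ?T"
      by (simp add: Q trace4_def right_diff_distrib sum_subtractf sum_distrib_left algebra_simps)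
    finally show ?thesis .
  qed
  have r1: "trace4 N ?G ?H ?T ?F = trace4 N ?T ?F ?G ?H" by
      (simp only: trace4_rotate[of N ?G] trace4_rotate[of N ?H])
  have r2: "trace4 N ?G ?H ?F ?T = trace4 N ?T ?G ?H ?F" by (simp only: trace4_rotate[of N ?T])
  have r3: "trace4 N ?H ?G ?T ?F = trace4 N ?T ?F ?H ?G" by
      (simp only: trace4_rotate[of N ?H] trace4_rotate[of N ?G])
  have r4: "trace4 N ?H ?G ?F ?T = trace4 N ?T ?H ?G ?F" by (simp only: trace4_rotate[of N ?T])
  show ?thesis unfolding lie_bivec_eq[OF fp] t1 t2 r1 r2 r3 r4 by simp
qed

lemma jacobiator_inv_alg:
  assumes "f \<in> inv_alg N K" "g \<in> inv_alg N K" "h \<in> inv_alg N K"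
  shows "jacobiator N K f g h x = 0"
  using assms
  by (simp add: jacobiator_eq_lie_bivec inv_alg_poly_fun lie_bivec_inv)

theorem mainTheorem3:
  fixes N K :: nat
  shows "(\<forall>p q a b c d. a < K \<and> b < K \<and> c < K \<and> d < K \<longrightarrow>
            pbr N K (tfun N K p a b) (tfun N K q c d) =
            (\<lambda>x. \<Sum>i\<in>{-1 .. int (min p q) - 1}.
                 tfun' N K (int (p + q) - 1 - i) a d x * tfun' N K i c b x
               - tfun' N K i a d x * tfun' N K (int (p + q) - 1 - i) c b x))
       \<and> (\<forall>n f. 1 \<le> n \<and> f \<in> inv_alg N K \<longrightarrow> pbr N K (trBt N K n) f = (\<lambda>x. 0))
       \<and> (\<forall>f\<in>inv_alg N K. \<forall>g\<in>inv_alg N K. \<forall>h\<in>inv_alg N K.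
            (\<lambda>x. pbr N K f (pbr N K g h) x + pbr N K g (pbr N K h f) x
                 + pbr N K h (pbr N K f g) x) = (\<lambda>x. 0))"
proof (intro conjI allI impI ballI)
  fix p q a b c d :: nat
  assume "a < K \<and> b < K \<and> c < K \<and> d < K"
  then show "pbr N K (tfun N K p a b) (tfun N K q c d) =
            (\<lambda>x. \<Sum>i\<in>{-1 .. int (min p q) - 1}.
                 tfun' N K (int (p + q) - 1 - i) a d x * tfun' N K i c b x
               - tfun' N K i a d x * tfun' N K (int (p + q) - 1 - i) c b x)"
    by (intro pbr_tfun) auto
next
  fix n :: nat and f
  assume "1 \<le> n \<and> f \<in> inv_alg N K"
  then show "pbr N K (trBt N K n) f = (\<lambda>x. 0)"
    by (intro pbr_trBt_inv) auto
next
  fix f g h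
  assume "f \<in> inv_alg N K" "g \<in> inv_alg N K" "h \<in> inv_alg N K"
  then show "(\<lambda>x. pbr N K f (pbr N K g h) x + pbr N K g (pbr N K h f) x + pbr N K h (pbr N K f g) x)
      = (\<lambda>x. 0)"
    using jacobiator_inv_alg[of f N K g h] by (simp add: jacobiator_def fun_eq_iff)
qed

end
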